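(* Fix $\epsilon>0$. Consider the random profile matching problem RPMP-$k$ (defined in the context) with $n$ men, $n$ women, $k=k(n)$, under the Weighted Hamming distance $d_w(\mathbf{a},\mathbf{a}')=\sum_{i=1}^k 2^{-i}\mathbf{1}(a_i\neq a_i')$. Then, with high probability: (i) if $k(n)>(1+\epsilon)\log n$, the fraction of participants with multiple stable partners tends to zero as $n\to\infty$; moreover $\frac{\log X}{\log n}\to -1$ in probability as $n\to\infty$, where $X$ is the matching distance of a randomly chosen participant; and (ii) if $k(n)>(2+\epsilon)\log n$, the stable matching is unique without resorting to tie-breaking (i.e., there is exactly one stable matching, and it does not depend on the tie-breaking lists).
   Context: RPMP-$k$: there is a set $\mathcal{M}$ of $n$ men and a set $\mathcal{W}$ of $n$ women. Each participant $x$ has a profile $\mathbf{a}(x)\in Q_k=\{0,1\}^k$; the profiles are independent and uniformly distributed on $Q_k$. Write $d_w(x,y)=d_w(\mathbf{a}(x),\mathbf{a}(y))$. Each participant $x$ has a tie-breaking list $T_x$, a uniformly random ordering of the opposite sex, all independent of each other and of the profiles. The strict preference list of $x$ ranks the opposite sex in increasing order of $d_w(x,\cdot)$, breaking ties by $T_x$. Stable matchings are in the sense of Gale and Shapley; $y$ is a stable partner of $x$ if they are matched in some stable matching. The matching distance of $x$ is $d_w(x,\mu(x))$ for a stable matching $\mu$ (this value is the same for all stable matchings). "With high probability" means with probability tending to $1$ as $n\to\infty$. $\log$ denotes the base-$2$ logarithm. *)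

theory Defs
  imports "HOL-Probability.Probability"
begin

(* Weighted Hamming distance on Q_k = {0,1}^k, profiles as bool lists of length k:
   d_w(a,a') = sum_{i=1}^k 2^(-i) * 1(a_i ~= a'_i)  (a_i is list entry a!(i-1)) *)
definition dw :: "nat \<Rightarrow> bool list \<Rightarrow> bool list \<Rightarrow> real" where
  "dw k a b = (\<Sum>i\<in>{1..k}. (1/2) ^ i * (if a ! (i - 1) \<noteq> b ! (i - 1) then 1 else 0))"

(* An rinstance: profiles of men 0..n-1 and women 0..n-1, and tie-breaking rankings.
   mtie I m is the tie-breaking ranking of man m over the women (smaller = preferred). *)
record rinstance =
  mprof :: "nat \<Rightarrow> bool list"
  wprof :: "nat \<Rightarrow> bool list"
  mtie  :: "nat \<Rightarrow> nat \<Rightarrow> nat"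
  wtie  :: "nat \<Rightarrow> nat \<Rightarrow> nat"

(* strict orderings of {0..n-1}, encoded as bijective rank functions *)
definition rankings :: "nat \<Rightarrow> (nat \<Rightarrow> nat) set" where
  "rankings n = {r \<in> {..<n} \<rightarrow>\<^sub>E {..<n}. bij_betw r {..<n} {..<n}}"

definition profiles_pmf :: "nat \<Rightarrow> nat \<Rightarrow> (nat \<Rightarrow> bool list) pmf" where
  "profiles_pmf n k = Pi_pmf {..<n} [] (\<lambda>_. pmf_of_set {xs :: bool list. length xs = k})"

definition ties_pmf :: "nat \<Rightarrow> (nat \<Rightarrow> nat \<Rightarrow> nat) pmf" where
  "ties_pmf n = Pi_pmf {..<n} (\<lambda>_. 0) (\<lambda>_. pmf_of_set (rankings n))"

definition rpmp_pmf :: "nat \<Rightarrow> nat \<Rightarrow> rinstance pmf" where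
  "rpmp_pmf n k =
     bind_pmf (profiles_pmf n k) (\<lambda>A.
     bind_pmf (profiles_pmf n k) (\<lambda>B.
     bind_pmf (ties_pmf n) (\<lambda>S.
     bind_pmf (ties_pmf n) (\<lambda>T.
     return_pmf \<lparr>mprof = A, wprof = B, mtie = S, wtie = T\<rparr>))))"

definition mprefers :: "nat \<Rightarrow> rinstance \<Rightarrow> nat \<Rightarrow> nat \<Rightarrow> nat \<Rightarrow> bool" where
  "mprefers k I m w1 w2 \<longleftrightarrow>
     dw k (mprof I m) (wprof I w1) < dw k (mprof I m) (wprof I w2) \<or>
     (dw k (mprof I m) (wprof I w1) = dw k (mprof I m) (wprof I w2) \<and> mtie I m w1 < mtie I m w2)"

definition wprefers :: "nat \<Rightarrow> rinstance \<Rightarrow> nat \<Rightarrow> nat \<Rightarrow> nat \<Rightarrow> bool" where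
  "wprefers k I w m1 m2 \<longleftrightarrow>
     dw k (wprof I w) (mprof I m1) < dw k (wprof I w) (mprof I m2) \<or>
     (dw k (wprof I w) (mprof I m1) = dw k (wprof I w) (mprof I m2) \<and> wtie I w m1 < wtie I w m2)"

(* a (perfect) matching: mu m is the partner of man m *)
definition matching :: "nat \<Rightarrow> (nat \<Rightarrow> nat) \<Rightarrow> bool" where
  "matching n \<mu> \<longleftrightarrow> \<mu> \<in> {..<n} \<rightarrow>\<^sub>E {..<n} \<and> bij_betw \<mu> {..<n} {..<n}"

definition stable :: "nat \<Rightarrow> nat \<Rightarrow> rinstance \<Rightarrow> (nat \<Rightarrow> nat) \<Rightarrow> bool" where
  "stable n k I \<mu> \<longleftrightarrow> matching n \<mu> \<and>
     \<not> (\<exists>m<n. \<exists>w<n. mprefers k I m w (\<mu> m) \<and> wprefers k I w m (inv_into {..<n} \<mu> w))"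

definition man_stable_partners :: "nat \<Rightarrow> nat \<Rightarrow> rinstance \<Rightarrow> nat \<Rightarrow> nat set" where
  "man_stable_partners n k I m = {w. \<exists>\<mu>. stable n k I \<mu> \<and> \<mu> m = w}"

definition woman_stable_partners :: "nat \<Rightarrow> nat \<Rightarrow> rinstance \<Rightarrow> nat \<Rightarrow> nat set" where
  "woman_stable_partners n k I w = {m. m < n \<and> (\<exists>\<mu>. stable n k I \<mu> \<and> \<mu> m = w)}"

definition frac_multi :: "nat \<Rightarrow> nat \<Rightarrow> rinstance \<Rightarrow> real" where
  "frac_multi n k I =
     real (card {m \<in> {..<n}. 2 \<le> card (man_stable_partners n k I m)}
         + card {w \<in> {..<n}. 2 \<le> card (woman_stable_partners n k I w)}) / real (2 * n)"

(* participants: Inl m = man m, Inr w = woman w *)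
definition participant_pmf :: "nat \<Rightarrow> (nat + nat) pmf" where
  "participant_pmf n = pmf_of_set (Inl ` {..<n} \<union> Inr ` {..<n})"

definition match_dist :: "nat \<Rightarrow> nat \<Rightarrow> rinstance \<Rightarrow> nat + nat \<Rightarrow> real" where
  "match_dist n k I x =
     (let \<mu> = (SOME \<mu>. stable n k I \<mu>) in
       case x of Inl m \<Rightarrow> dw k (mprof I m) (wprof I (\<mu> m))
               | Inr w \<Rightarrow> dw k (mprof I (inv_into {..<n} \<mu> w)) (wprof I w))"

definition unique_without_ties :: "nat \<Rightarrow> nat \<Rightarrow> rinstance \<Rightarrow> bool" where
  "unique_without_ties n k I \<longleftrightarrow>
     (\<exists>\<mu>. \<forall>S T. (\<forall>i<n. S i \<in> rankings n \<and> T i \<in> rankings n) \<longrightarrow>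
        {\<nu>. stable n k (I\<lparr>mtie := S, wtie := T\<rparr>) \<nu>} = {\<mu>})"

end

theory Submission
  imports Defs
begin

(* Since d_w(a, b) < 2^-j holds exactly when a and b agree in their first j bits, d_w is
   injective, and a participant's preferences can only tie between partners with identical
   profiles.  Following a participant through two stable matchings mu and nu
   (m -> the nu-partner of mu(m) -> ...) the distances to the partners can only decrease
   around a cycle, so they are all equal: anyone with two stable partners has a twin of the
   same sex with the same profile, and distinct profiles give a unique stable matching that
   ignores the tie-breaking lists.  The expected number of ordered twin pairs is
   2n(n-1)2^-k, so Markov's inequality gives the first claim of (i) and claim (ii).

   For the matching distance, a distance below n^(-1-delta) means that the first
   j1 ~ (1+delta) log n bits of the pair agree, and there are only n^2 2^-j1 such pairs
   in expectation.  A distance above n^(-1+delta) means that the first j2 ~ (1-delta) log n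
   bits differ.  Stability forbids a man and a woman of the same prefix class B from both
   being matched outside B, so at most the surplus |#men in B - #women in B| of each class
   leaves it; by Cauchy-Schwarz the total surplus is bounded by the second moment of the
   surpluses, whose expectation is at most 2n. *)

section \<open>The weighted Hamming distance\<close>

text \<open>Horner form of \<^const>\<open>dw\<close>: the weight \<open>2\<^sup>-\<^sup>i\<close> of coordinate \<open>i\<close> becomes one halving per coordinate.\<close>

fun dw_list :: "bool list \<Rightarrow> bool list \<Rightarrow> real" where
  "dw_list (x # xs) (y # ys) = (of_bool (x \<noteq> y) + dw_list xs ys) / 2"
| "dw_list _ _ = 0"

lemma dw_eq_dw_list:
  assumes "length a = k" "length b = k"
  shows "dw k a b = dw_list a b"
  using assms
proof (induction a b arbitrary: k rule: dw_list.induct)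
  case (1 x xs y ys)
  then obtain k' where k: "k = Suc k'" "length xs = k'" "length ys = k'" by auto
  let ?t = "\<lambda>i. of_bool ((x # xs) ! (i - 1) \<noteq> (y # ys) ! (i - 1)) :: real"
  have "dw k (x # xs) (y # ys) = (\<Sum>i\<in>{1..Suc k'}. (1/2) ^ i * ?t i)"
    by (simp add: dw_def k of_bool_def)
  also have "\<dots> = (1/2) * of_bool (x \<noteq> y) + (\<Sum>i\<in>{Suc 1..Suc k'}. (1/2) ^ i * ?t i)"
    by (subst sum.atLeast_Suc_atMost) auto
  also have "(\<Sum>i\<in>{Suc 1..Suc k'}. (1/2) ^ i * ?t i)
      = (1/2) * (\<Sum>i\<in>{1..k'}. (1/2) ^ i * of_bool (xs ! (i - 1) \<noteq> ys ! (i - 1)))"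
    by (subst sum.shift_bounds_cl_Suc_ivl, subst sum_distrib_left, rule sum.cong) auto
  also have "(\<Sum>i\<in>{1..k'}. (1/2) ^ i * of_bool (xs ! (i - 1) \<noteq> ys ! (i - 1))) = dw_list xs ys"
    using 1 k by (simp add: dw_def of_bool_def)
  finally show ?case by simp
qed (simp_all add: dw_def)

lemma dw_list_bounds: "length a = length b \<Longrightarrow> 0 \<le> dw_list a b \<and> dw_list a b < 1"
  by (induction a b rule: dw_list.induct) auto

lemma dw_list_less_half_power_iff:
  "length a = length b \<Longrightarrow> j \<le> length a \<Longrightarrow> dw_list a b < (1/2) ^ j \<longleftrightarrow> take j a = take j b"
proof (induction j arbitrary: a b)
  case 0
  then show ?case using dw_list_bounds[of a b] by simp
next
  case (Suc j)
  then obtain x xs y ys where ab: "a = x # xs" "b = y # ys" by (cases a; cases b) auto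
  have len: "length xs = length ys" "j \<le> length xs" using Suc.prems ab by auto
  have "0 \<le> dw_list xs ys" "dw_list xs ys < 1" using dw_list_bounds[OF len(1)] by auto
  moreover have "(1/2::real) ^ j \<le> 1" by (simp add: power_le_one)
  ultimately show ?case using Suc.IH[OF len] ab by (cases "x = y") auto
qed

lemma dw_list_inj:
  "length a = length b \<Longrightarrow> length a = length c \<Longrightarrow> dw_list a b = dw_list a c \<Longrightarrow> b = c"
proof (induction a arbitrary: b c)
  case (Cons x xs)
  then obtain y ys z zs where bc: "b = y # ys" "c = z # zs" by (cases b; cases c) auto
  have len: "length xs = length ys" "length xs = length zs" using Cons.prems bc by auto
  have "of_bool (x \<noteq> y) + dw_list xs ys = of_bool (x \<noteq> z) + dw_list xs zs"
    using Cons.prems(3) bc by simp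
  moreover note dw_list_bounds[OF len(1)] dw_list_bounds[OF len(2)]
  ultimately have "y = z" "dw_list xs ys = dw_list xs zs" by (cases x; cases y; cases z; auto)+
  then show ?case using Cons.IH[OF len] bc by simp
qed simp

lemma dw_commute: "dw k a b = dw k b a"
  unfolding dw_def by (intro sum.cong) auto

lemma dw_nonneg: "0 \<le> dw k a b"
  unfolding dw_def by (intro sum_nonneg) auto

lemma dw_less_half_power_iff:
  "length a = k \<Longrightarrow> length b = k \<Longrightarrow> j \<le> k \<Longrightarrow> dw k a b < (1/2) ^ j \<longleftrightarrow> take j a = take j b"
  by (simp add: dw_eq_dw_list dw_list_less_half_power_iff)

lemma dw_inj:
  "length a = k \<Longrightarrow> length b = k \<Longrightarrow> length c = k \<Longrightarrow> dw k a b = dw k a c \<Longrightarrow> b = c"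
  by (simp add: dw_eq_dw_list dw_list_inj)

section \<open>Deferred acceptance\<close>

lemma strict_total_rank_less_iff:
  fixes P :: "'a \<Rightarrow> 'a \<Rightarrow> bool"
  assumes fin: "finite A" and irrefl: "\<And>x. \<not> P x x" and trans: "\<And>x y z. P x y \<Longrightarrow> P y z \<Longrightarrow> P x z"
    and total: "\<And>x y. x \<in> A \<Longrightarrow> y \<in> A \<Longrightarrow> x \<noteq> y \<Longrightarrow> P x y \<or> P y x"
    and xy: "x \<in> A" "y \<in> A"
  shows "P x y \<longleftrightarrow> card {z\<in>A. P z x} < card {z\<in>A. P z y}"
proof -
  have less: "card {z\<in>A. P z a} < card {z\<in>A. P z b}" if "P a b" "a \<in> A" for a b
  proof (rule psubset_card_mono)
    show "{z\<in>A. P z a} \<subset> {z\<in>A. P z b}" using that irrefl trans by blast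
  qed (use fin in simp)
  show ?thesis
    using less[of x y] less[of y x] total[OF xy] xy by (cases "x = y") auto
qed

lemma inj_on_strict_total_rank:
  fixes P :: "'a \<Rightarrow> 'a \<Rightarrow> bool"
  assumes fin: "finite A" and irrefl: "\<And>x. \<not> P x x" and trans: "\<And>x y z. P x y \<Longrightarrow> P y z \<Longrightarrow> P x z"
    and total: "\<And>x y. x \<in> A \<Longrightarrow> y \<in> A \<Longrightarrow> x \<noteq> y \<Longrightarrow> P x y \<or> P y x"
  shows "inj_on (\<lambda>x. card {z\<in>A. P z x}) A"
proof (rule inj_onI)
  fix x y assume xy: "x \<in> A" "y \<in> A" and eq: "card {z\<in>A. P z x} = card {z\<in>A. P z y}"
  show "x = y"
  proof (rule ccontr)
    assume "x \<noteq> y"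
    then show False
      using total[OF xy] eq strict_total_rank_less_iff[where A=A and P=P, OF fin irrefl trans total xy]
        strict_total_rank_less_iff[where A=A and P=P, OF fin irrefl trans total xy(2,1)] by auto
  qed
qed

text \<open>Men and women are both indexed by \<open>A\<close>; \<open>rm m\<close> and \<open>rw w\<close> are rank functions (smaller is better).\<close>

locale ranked_market =
  fixes A :: "'a set" and rm rw :: "'a \<Rightarrow> 'a \<Rightarrow> nat"
  assumes finite_A: "finite A"
    and inj_rw: "\<And>w. w \<in> A \<Longrightarrow> inj_on (rw w) A"
begin

text \<open>\<open>R m\<close> is the set of women who have rejected \<open>m\<close>; he proposes to his favourite among the others.\<close>

definition proposal :: "('a \<Rightarrow> 'a set) \<Rightarrow> 'a \<Rightarrow> 'a" where
  "proposal R m = (SOME w. w \<in> A - R m \<and> (\<forall>w'\<in>A - R m. rm m w \<le> rm m w'))"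

text \<open>A justified rejection state with the largest number of rejections is the outcome of the
  men-proposing deferred acceptance algorithm.\<close>

definition justified :: "('a \<Rightarrow> 'a set) \<Rightarrow> bool" where
  "justified R \<longleftrightarrow> (\<forall>m\<in>A. R m \<subseteq> A) \<and>
     (\<forall>m\<in>A. \<forall>w\<in>R m. \<exists>m'\<in>A. A - R m' \<noteq> {} \<and> proposal R m' = w \<and> rw w m' < rw w m)"

definition rejections :: "('a \<Rightarrow> 'a set) \<Rightarrow> nat" where
  "rejections R = (\<Sum>m\<in>A. card (R m))"

lemma proposal_spec:
  assumes "A - R m \<noteq> {}"
  shows "proposal R m \<in> A - R m" "\<And>w. w \<in> A - R m \<Longrightarrow> rm m (proposal R m) \<le> rm m w"
proof -
  have fin: "finite (A - R m)" using finite_A by simp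
  have "Min (rm m ` (A - R m)) \<in> rm m ` (A - R m)" using fin assms by (intro Min_in) auto
  then obtain w where "w \<in> A - R m" "rm m w = Min (rm m ` (A - R m))" by auto
  then have "\<exists>w. w \<in> A - R m \<and> (\<forall>w'\<in>A - R m. rm m w \<le> rm m w')" using fin by auto
  from someI_ex[OF this] show "proposal R m \<in> A - R m" "\<And>w. w \<in> A - R m \<Longrightarrow> rm m (proposal R m) \<le> rm m w"
    unfolding proposal_def by blast+
qed

definition maximal_justified :: "('a \<Rightarrow> 'a set) \<Rightarrow> bool" where
  "maximal_justified R \<longleftrightarrow> justified R \<and> (\<forall>R'. justified R' \<longrightarrow> rejections R' \<le> rejections R)"

lemma maximal_justified_exists: "\<exists>R. maximal_justified R"
proof -
  have "rejections R < card A * card A + 1" if "justified R" for R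
  proof -
    have "rejections R \<le> (\<Sum>m\<in>A. card A)"
      unfolding rejections_def using that finite_A by (intro sum_mono card_mono) (auto simp: justified_def)
    then show ?thesis by simp
  qed
  moreover have "justified (\<lambda>_. {})" unfolding justified_def by simp
  ultimately show ?thesis
    unfolding maximal_justified_def using ex_has_greatest_nat[of justified "\<lambda>_. {}" rejections] by blast
qed

lemma justified_reject:
  assumes R: "justified R" and m12: "m1 \<in> A" "m2 \<in> A" "m1 \<noteq> m2"
    and avail: "A - R m1 \<noteq> {}" "A - R m2 \<noteq> {}"
    and proposes: "proposal R m1 = w" "proposal R m2 = w" and lt: "rw w m1 < rw w m2"
  defines "R' \<equiv> R(m2 := insert w (R m2))"
  shows "justified R'" "rejections R' = rejections R + 1"
proof -
  have w: "w \<in> A" "w \<notin> R m2" using proposal_spec(1)[of R m2, OF avail(2)] proposes by auto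
  have same: "R' m = R m" "proposal R' m = proposal R m" if "m \<noteq> m2" for m
    using that unfolding R'_def proposal_def by auto
  have justify: "\<exists>m'\<in>A. A - R' m' \<noteq> {} \<and> proposal R' m' = w'' \<and> rw w'' m' < rw w'' m"
    if m: "m \<in> A" and w'': "w'' \<in> R' m" for m w''
  proof (cases "m = m2 \<and> w'' = w")
    case True
    then show ?thesis using m12 avail proposes lt same[of m1] by auto
  next
    case False
    then have "w'' \<in> R m" using w'' by (auto simp: R'_def split: if_splits)
    then obtain m' where m': "m' \<in> A" "A - R m' \<noteq> {}" "proposal R m' = w''" "rw w'' m' < rw w'' m"
      using R m unfolding justified_def by blast
    show ?thesis
    proof (cases "m' = m2")
      case True
      then show ?thesis using m' m12 avail proposes lt same[of m1] by (intro bexI[of _ m1]) auto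
    qed (use m' same[of m'] in auto)
  qed
  have "\<forall>m\<in>A. R' m \<subseteq> A" using R w unfolding justified_def R'_def by auto
  with justify show "justified R'" unfolding justified_def by blast
  have "finite (R m2)" using R m12(2) finite_A finite_subset unfolding justified_def by blast
  then have "card (R' m) = card (R m) + of_bool (m = m2)" for m
    using w same[of m] by (cases "m = m2") (auto simp: R'_def)
  then show "rejections R' = rejections R + 1"
    unfolding rejections_def using m12 finite_A by (simp add: sum.distrib)
qed

lemma maximal_justified_proposals_distinct:
  assumes maximal: "maximal_justified R"
    and m12: "m1 \<in> A" "m2 \<in> A" and avail: "A - R m1 \<noteq> {}" "A - R m2 \<noteq> {}"
    and eq: "proposal R m1 = proposal R m2"
  shows "m1 = m2"
proof (rule ccontr)
  assume ne: "m1 \<noteq> m2"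
  have R: "justified R" using maximal by (simp add: maximal_justified_def)
  have no_reject: False
    if "m1 \<in> A" "m2 \<in> A" "m1 \<noteq> m2" "A - R m1 \<noteq> {}" "A - R m2 \<noteq> {}"
      "proposal R m1 = w" "proposal R m2 = w" "rw w m1 < rw w m2" for m1 m2 w
    using maximal justified_reject[OF R that] unfolding maximal_justified_def by fastforce
  let ?w = "proposal R m1"
  have "?w \<in> A" using proposal_spec(1)[of R m1, OF avail(1)] by auto
  then have "rw ?w m1 < rw ?w m2 \<or> rw ?w m2 < rw ?w m1"
    using inj_onD[OF inj_rw _ m12] ne by fastforce
  then show False
    using no_reject[OF m12 ne avail refl eq[symmetric]]
      no_reject[OF m12(2,1) ne[symmetric] avail(2,1) eq[symmetric] refl] by blast
qed

text \<open>A man rejected by everybody would force \<open>|A|\<close> distinct proposals from the other \<open>|A| - 1\<close> men.\<close>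

lemma maximal_justified_never_exhausted:
  assumes maximal: "maximal_justified R"
    and m: "m \<in> A"
  shows "A - R m \<noteq> {}"
proof
  assume "A - R m = {}"
  have R: "justified R" using maximal by (simp add: maximal_justified_def)
  from \<open>A - R m = {}\<close> have Am: "A \<subseteq> R m" by auto
  define P where "P = {m'\<in>A. A - R m' \<noteq> {}}"
  have "A \<subseteq> proposal R ` P"
    using R m Am unfolding justified_def P_def by fastforce
  then have "card A \<le> card (proposal R ` P)" using finite_A P_def by (intro card_mono) auto
  also have "\<dots> \<le> card P" using finite_A P_def by (intro card_image_le) simp
  also have "\<dots> \<le> card (A - {m})" using finite_A Am unfolding P_def by (intro card_mono) auto
  also have "\<dots> < card A" using m finite_A by (meson card_Diff1_less)
  finally show False by simp
qed

theorem deferred_acceptance: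
  "\<exists>\<mu>. \<mu> ` A = A \<and> inj_on \<mu> A \<and>
     (\<forall>m\<in>A. \<forall>w\<in>A. rm m w < rm m (\<mu> m) \<longrightarrow> \<not> rw w m < rw w (inv_into A \<mu> w))"
proof -
  obtain R where maximal: "maximal_justified R" using maximal_justified_exists by blast
  then have R: "justified R" by (simp add: maximal_justified_def)
  note avail = maximal_justified_never_exhausted[OF maximal]
  define \<mu> where "\<mu> = proposal R"
  have inj: "inj_on \<mu> A"
    unfolding \<mu>_def using maximal_justified_proposals_distinct[OF maximal] avail by (intro inj_onI) auto
  have "\<mu> ` A \<subseteq> A" unfolding \<mu>_def using proposal_spec(1)[of R, OF avail] by auto
  then have img: "\<mu> ` A = A" using card_image[OF inj] finite_A by (intro card_subset_eq) auto
  have "\<not> rw w m < rw w (inv_into A \<mu> w)" if mw: "m \<in> A" "w \<in> A" "rm m w < rm m (\<mu> m)" for m w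
  proof -
    have "w \<in> R m" using proposal_spec(2)[of R m, OF avail[OF mw(1)], of w] mw unfolding \<mu>_def by force
    then obtain m' where m': "m' \<in> A" "proposal R m' = w" "rw w m' < rw w m"
      using R mw unfolding justified_def by blast
    then have "inv_into A \<mu> w = m'" using inj unfolding \<mu>_def by (metis inv_into_f_f)
    then show ?thesis using m' by simp
  qed
  then show ?thesis using img inj by blast
qed

end

section \<open>Stable matchings of a profile instance\<close>

definition wf_instance :: "nat \<Rightarrow> nat \<Rightarrow> rinstance \<Rightarrow> bool" where
  "wf_instance n k I \<longleftrightarrow> (\<forall>i<n. length (mprof I i) = k \<and> length (wprof I i) = k \<and>
      mtie I i \<in> rankings n \<and> wtie I i \<in> rankings n)"

lemma wf_instance_lengths:
  "wf_instance n k I \<Longrightarrow> i < n \<Longrightarrow> length (mprof I i) = k"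
  "wf_instance n k I \<Longrightarrow> i < n \<Longrightarrow> length (wprof I i) = k"
  unfolding wf_instance_def by auto

lemma inj_on_rankings: "r \<in> rankings n \<Longrightarrow> inj_on r {..<n}"
  unfolding rankings_def bij_betw_def by auto

lemma mprefers_irrefl: "\<not> mprefers k I m w w"
  unfolding mprefers_def by auto

lemma wprefers_irrefl: "\<not> wprefers k I w m m"
  unfolding wprefers_def by auto

lemma mprefers_trans: "mprefers k I m a b \<Longrightarrow> mprefers k I m b c \<Longrightarrow> mprefers k I m a c"
  unfolding mprefers_def by auto

lemma wprefers_trans: "wprefers k I w a b \<Longrightarrow> wprefers k I w b c \<Longrightarrow> wprefers k I w a c"
  unfolding wprefers_def by auto

lemma mprefers_total:
  assumes "wf_instance n k I" "m < n" "a < n" "b < n" "a \<noteq> b"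
  shows "mprefers k I m a b \<or> mprefers k I m b a"
proof -
  have "mtie I m a \<noteq> mtie I m b"
    using assms inj_on_rankings inj_onD unfolding wf_instance_def by (metis lessThan_iff)
  then show ?thesis unfolding mprefers_def by linarith
qed

lemma wprefers_total:
  assumes "wf_instance n k I" "w < n" "a < n" "b < n" "a \<noteq> b"
  shows "wprefers k I w a b \<or> wprefers k I w b a"
proof -
  have "wtie I w a \<noteq> wtie I w b"
    using assms inj_on_rankings inj_onD unfolding wf_instance_def by (metis lessThan_iff)
  then show ?thesis unfolding wprefers_def by linarith
qed

lemma mprefers_imp_dw_le:
  "mprefers k I m a b \<Longrightarrow> dw k (mprof I m) (wprof I a) \<le> dw k (mprof I m) (wprof I b)"
  unfolding mprefers_def by auto

lemma wprefers_imp_dw_le: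
  "wprefers k I w a b \<Longrightarrow> dw k (wprof I w) (mprof I a) \<le> dw k (wprof I w) (mprof I b)"
  unfolding wprefers_def by auto

lemma matchingD:
  assumes "matching n \<mu>"
  shows "\<mu> \<in> {..<n} \<rightarrow>\<^sub>E {..<n}" "bij_betw \<mu> {..<n} {..<n}"
    "\<And>m. m < n \<Longrightarrow> \<mu> m < n"
    "\<And>w. w < n \<Longrightarrow> inv_into {..<n} \<mu> w < n"
    "\<And>w. w < n \<Longrightarrow> \<mu> (inv_into {..<n} \<mu> w) = w"
    "\<And>m. m < n \<Longrightarrow> inv_into {..<n} \<mu> (\<mu> m) = m"
proof -
  from assms show \<mu>: "\<mu> \<in> {..<n} \<rightarrow>\<^sub>E {..<n}" "bij_betw \<mu> {..<n} {..<n}"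
    unfolding matching_def by auto
  then show "\<And>m. m < n \<Longrightarrow> \<mu> m < n" by auto
  from \<mu>(2) show "\<And>w. w < n \<Longrightarrow> inv_into {..<n} \<mu> w < n"
    "\<And>w. w < n \<Longrightarrow> \<mu> (inv_into {..<n} \<mu> w) = w"
    "\<And>m. m < n \<Longrightarrow> inv_into {..<n} \<mu> (\<mu> m) = m"
    by (metis bij_betw_def inv_into_into lessThan_iff f_inv_into_f inv_into_f_f)+
qed

lemma stableD:
  assumes "stable n k I \<mu>"
  shows "matching n \<mu>"
    "\<And>m w. m < n \<Longrightarrow> w < n \<Longrightarrow> mprefers k I m w (\<mu> m) \<Longrightarrow> \<not> wprefers k I w m (inv_into {..<n} \<mu> w)"
  using assms unfolding stable_def by blast+

lemma stable_exists:
  assumes wf: "wf_instance n k I"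
  shows "\<exists>\<mu>. stable n k I \<mu>"
proof -
  let ?A = "{..<n}"
  define rm where "rm m w = card {z\<in>?A. mprefers k I m z w}" for m w
  define rw where "rw w m = card {z\<in>?A. wprefers k I w z m}" for w m
  have rm: "mprefers k I m a b \<longleftrightarrow> rm m a < rm m b" if "m \<in> ?A" "a \<in> ?A" "b \<in> ?A" for m a b
    unfolding rm_def
    by (rule strict_total_rank_less_iff) (use that mprefers_irrefl mprefers_trans mprefers_total[OF wf] in auto)
  have rw: "wprefers k I w a b \<longleftrightarrow> rw w a < rw w b" if "w \<in> ?A" "a \<in> ?A" "b \<in> ?A" for w a b
    unfolding rw_def
    by (rule strict_total_rank_less_iff) (use that wprefers_irrefl wprefers_trans wprefers_total[OF wf] in auto)
  interpret ranked_market ?A rm rw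
  proof
    show "inj_on (rw w) ?A" if "w \<in> ?A" for w
      unfolding rw_def
      by (rule inj_on_strict_total_rank) (use that wprefers_irrefl wprefers_trans wprefers_total[OF wf] in auto)
  qed simp
  obtain \<mu> where img: "\<mu> ` ?A = ?A" and inj: "inj_on \<mu> ?A"
    and no_block: "\<And>m w. m \<in> ?A \<Longrightarrow> w \<in> ?A \<Longrightarrow> rm m w < rm m (\<mu> m) \<Longrightarrow> \<not> rw w m < rw w (inv_into ?A \<mu> w)"
    using deferred_acceptance by blast
  define \<mu>' where "\<mu>' = restrict \<mu> ?A"
  have inv: "inv_into ?A \<mu>' w = inv_into ?A \<mu> w" for w
    unfolding inv_into_def \<mu>'_def by (rule arg_cong[where f=Eps]) (auto simp: fun_eq_iff)
  have "matching n \<mu>'"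
    using img inj unfolding matching_def \<mu>'_def by (auto simp: bij_betw_def inj_on_def)
  moreover have "\<not> (mprefers k I m w (\<mu>' m) \<and> wprefers k I w m (inv_into ?A \<mu>' w))"
    if "m < n" "w < n" for m w
  proof
    assume a: "mprefers k I m w (\<mu>' m) \<and> wprefers k I w m (inv_into ?A \<mu>' w)"
    have mw: "m \<in> ?A" "w \<in> ?A" "\<mu> m \<in> ?A" "inv_into ?A \<mu> w \<in> ?A"
      using that img by (auto, metis inv_into_into lessThan_iff)
    show False using a rm[OF mw(1,2,3)] rw[OF mw(2,1,4)] no_block[OF mw(1,2)] inv mw
      by (simp add: \<mu>'_def)
  qed
  ultimately show ?thesis unfolding stable_def by blast
qed

lemma funpow_returns_inj_on:
  fixes \<sigma> :: "'a \<Rightarrow> 'a"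
  assumes fin: "finite A" and inj: "inj_on \<sigma> A" and into: "\<And>x. x \<in> A \<Longrightarrow> \<sigma> x \<in> A" and x: "x \<in> A"
  shows "\<exists>p>0. (\<sigma> ^^ p) x = x"
proof -
  have in_A: "(\<sigma> ^^ i) z \<in> A" if "z \<in> A" for i z
    using that by (induction i) (auto simp: into)
  have cancel: "z = x" if "z \<in> A" "(\<sigma> ^^ i) z = (\<sigma> ^^ i) x" for i z
    using that
  proof (induction i)
    case (Suc i)
    then show ?case using inj in_A[OF Suc.prems(1)] in_A[OF x] by (auto dest: inj_onD)
  qed simp
  have "\<not> inj_on (\<lambda>i. (\<sigma> ^^ i) x) {..card A}"
  proof
    assume "inj_on (\<lambda>i. (\<sigma> ^^ i) x) {..card A}"
    then have "card ((\<lambda>i. (\<sigma> ^^ i) x) ` {..card A}) = Suc (card A)" by (simp add: card_image)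
    moreover have "card ((\<lambda>i. (\<sigma> ^^ i) x) ` {..card A}) \<le> card A"
      using in_A x fin by (intro card_mono) auto
    ultimately show False by simp
  qed
  then obtain i j where ij: "i < j" "(\<sigma> ^^ i) x = (\<sigma> ^^ j) x"
    unfolding inj_on_def by (metis linorder_neqE_nat)
  then have "(\<sigma> ^^ i) ((\<sigma> ^^ (j - i)) x) = (\<sigma> ^^ i) x"
    by (metis funpow_add le_add_diff_inverse less_imp_le o_apply)
  then have "(\<sigma> ^^ (j - i)) x = x" using cancel in_A x by blast
  then show ?thesis using ij(1) by (intro exI[of _ "j - i"]) auto
qed

text \<open>Comparing two stable matchings: if \<open>x\<close> prefers his \<open>\<mu>\<close>-partner \<open>w\<close>, then \<open>w\<close> prefers her
  \<open>\<nu>\<close>-partner \<open>\<sigma>\<close>, who in turn prefers his \<open>\<mu>\<close>-partner; distances can only shrink along the way.\<close>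

lemma stable_rotation_step:
  assumes wf: "wf_instance n k I" and \<mu>: "stable n k I \<mu>" and \<nu>: "stable n k I \<nu>"
    and x: "x < n" and pref: "mprefers k I x (\<mu> x) (\<nu> x)"
  defines "\<sigma> \<equiv> inv_into {..<n} \<nu> (\<mu> x)"
  shows "\<sigma> < n" "\<sigma> \<noteq> x" "\<nu> \<sigma> = \<mu> x" "mprefers k I \<sigma> (\<mu> \<sigma>) (\<nu> \<sigma>)"
    "dw k (mprof I \<sigma>) (wprof I (\<nu> \<sigma>)) \<le> dw k (mprof I x) (wprof I (\<mu> x))"
proof -
  note M = matchingD[OF stableD(1)[OF \<mu>]] and N = matchingD[OF stableD(1)[OF \<nu>]]
  let ?w = "\<mu> x"
  have w: "?w < n" using M(3) x by blast
  show \<sigma>: "\<sigma> < n" "\<nu> \<sigma> = ?w" unfolding \<sigma>_def using N(4,5) w by blast+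
  show ne: "\<sigma> \<noteq> x" using \<sigma>(2) pref mprefers_irrefl by fastforce
  have "\<not> wprefers k I ?w x \<sigma>" using stableD(2)[OF \<nu> x w] pref unfolding \<sigma>_def by blast
  then have w_pref: "wprefers k I ?w \<sigma> x" using wprefers_total[OF wf w x \<sigma>(1)] ne by blast
  have "\<not> mprefers k I \<sigma> ?w (\<mu> \<sigma>)" using stableD(2)[OF \<mu> \<sigma>(1) w] w_pref M(6)[OF x] by auto
  moreover have "?w \<noteq> \<mu> \<sigma>" using M(6)[OF \<sigma>(1)] M(6)[OF x] ne by metis
  ultimately show "mprefers k I \<sigma> (\<mu> \<sigma>) (\<nu> \<sigma>)"
    using mprefers_total[OF wf \<sigma>(1) M(3)[OF \<sigma>(1)] w] \<sigma>(2) by auto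
  show "dw k (mprof I \<sigma>) (wprof I (\<nu> \<sigma>)) \<le> dw k (mprof I x) (wprof I (\<mu> x))"
    using wprefers_imp_dw_le[OF w_pref] \<sigma>(2) by (simp add: dw_commute)
qed

text \<open>Iterating the rotation step returns to \<open>m\<close>, so all inequalities along the cycle are equalities;
  by injectivity of \<^const>\<open>dw\<close> this forces equal profiles.\<close>

lemma stable_partner_preferred_imp_twins:
  assumes wf: "wf_instance n k I" and \<mu>: "stable n k I \<mu>" and \<nu>: "stable n k I \<nu>"
    and m: "m < n" and pref: "mprefers k I m (\<mu> m) (\<nu> m)"
  shows "wprof I (\<mu> m) = wprof I (\<nu> m) \<and> (\<exists>m'<n. m' \<noteq> m \<and> mprof I m' = mprof I m)"
proof -
  note M = matchingD[OF stableD(1)[OF \<mu>]] and N = matchingD[OF stableD(1)[OF \<nu>]]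
  define \<sigma> where "\<sigma> x = inv_into {..<n} \<nu> (\<mu> x)" for x
  define D where "D x = dw k (mprof I x) (wprof I (\<mu> x))" for x
  define E where "E x = dw k (mprof I x) (wprof I (\<nu> x))" for x
  note step = stable_rotation_step[OF wf \<mu> \<nu>, folded \<sigma>_def]
  have orbit: "(\<sigma> ^^ i) m < n \<and> mprefers k I ((\<sigma> ^^ i) m) (\<mu> ((\<sigma> ^^ i) m)) (\<nu> ((\<sigma> ^^ i) m))" for i
    by (induction i) (use m pref step in auto)
  have E_decr: "E ((\<sigma> ^^ Suc i) m) \<le> E (\<sigma> m)" for i
  proof (induction i)
    case (Suc i)
    have "E ((\<sigma> ^^ Suc (Suc i)) m) \<le> D ((\<sigma> ^^ Suc i) m)"
      using step(5) orbit[of "Suc i"] unfolding D_def E_def by simp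
    also have "\<dots> \<le> E ((\<sigma> ^^ Suc i) m)"
      using mprefers_imp_dw_le orbit[of "Suc i"] unfolding D_def E_def by blast
    finally show ?case using Suc.IH by simp
  qed simp
  have "inj_on \<sigma> {..<n}"
    by (rule inj_onI) (metis M(3,6) N(5) \<sigma>_def lessThan_iff)
  then obtain p where p: "p > 0" "(\<sigma> ^^ p) m = m"
    using funpow_returns_inj_on[of "{..<n}" \<sigma> m] m M(3) N(4) unfolding \<sigma>_def by auto
  have "E m \<le> E (\<sigma> m)" using E_decr[of "p - 1"] p by simp
  moreover have "E (\<sigma> m) \<le> D m" "D m \<le> E m"
    using step(5)[OF m pref] mprefers_imp_dw_le[OF pref] unfolding D_def E_def by auto
  ultimately have "D m = E m" "dw k (wprof I (\<mu> m)) (mprof I (\<sigma> m)) = dw k (wprof I (\<mu> m)) (mprof I m)"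
    using step(3)[OF m pref] unfolding D_def E_def by (auto simp: dw_commute)
  moreover note len = wf_instance_lengths[OF wf]
  ultimately have "wprof I (\<mu> m) = wprof I (\<nu> m)" "mprof I (\<sigma> m) = mprof I m"
    using dw_inj len m M(3) N(3) step(1)[OF m pref] unfolding D_def E_def by metis+
  then show ?thesis using step(1,2)[OF m pref] by blast
qed

lemma stable_partners_differ_imp_twins:
  assumes wf: "wf_instance n k I" and \<mu>: "stable n k I \<mu>" and \<nu>: "stable n k I \<nu>"
    and m: "m < n" and ne: "\<mu> m \<noteq> \<nu> m"
  shows "wprof I (\<mu> m) = wprof I (\<nu> m) \<and> (\<exists>m'<n. m' \<noteq> m \<and> mprof I m' = mprof I m)"
proof -
  have "\<mu> m < n" "\<nu> m < n" using matchingD(3)[OF stableD(1)] \<mu> \<nu> m by blast+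
  then have "mprefers k I m (\<mu> m) (\<nu> m) \<or> mprefers k I m (\<nu> m) (\<mu> m)"
    using mprefers_total[OF wf m] ne by blast
  then show ?thesis
    using stable_partner_preferred_imp_twins[OF wf \<mu> \<nu> m]
      stable_partner_preferred_imp_twins[OF wf \<nu> \<mu> m] by metis
qed

lemma two_le_card_imp_two_elements: "2 \<le> card S \<Longrightarrow> \<exists>a\<in>S. \<exists>b\<in>S. a \<noteq> b"
  by (metis card_2_iff' card_le_Suc_iff numeral_2_eq_2 obtain_subset_with_card_n subset_iff)

lemma man_multiple_stable_partners_imp_twin:
  assumes wf: "wf_instance n k I" and m: "m < n" and two: "2 \<le> card (man_stable_partners n k I m)"
  shows "\<exists>m'<n. m' \<noteq> m \<and> mprof I m' = mprof I m"
proof -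
  obtain \<mu> \<nu> where "stable n k I \<mu>" "stable n k I \<nu>" "\<mu> m \<noteq> \<nu> m"
    using two_le_card_imp_two_elements[OF two] unfolding man_stable_partners_def by auto
  then show ?thesis using stable_partners_differ_imp_twins[OF wf _ _ m] by blast
qed

lemma woman_multiple_stable_partners_imp_twin:
  assumes wf: "wf_instance n k I" and w: "w < n" and two: "2 \<le> card (woman_stable_partners n k I w)"
  shows "\<exists>w'<n. w' \<noteq> w \<and> wprof I w' = wprof I w"
proof -
  obtain a b \<mu> \<nu> where ab: "a < n" "b < n" "a \<noteq> b" and \<mu>: "stable n k I \<mu>" "\<mu> a = w"
    and \<nu>: "stable n k I \<nu>" "\<nu> b = w"
    using two_le_card_imp_two_elements[OF two] unfolding woman_stable_partners_def by auto
  note N = matchingD[OF stableD(1)[OF \<nu>(1)]]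
  have "\<nu> a \<noteq> w" using N(6) ab \<nu>(2) by metis
  then have "wprof I (\<nu> a) = wprof I w"
    using stable_partners_differ_imp_twins[OF wf \<mu>(1) \<nu>(1) ab(1)] \<mu>(2) by auto
  then show ?thesis using \<open>\<nu> a \<noteq> w\<close> N(3)[OF ab(1)] by blast
qed

lemma stable_unique_of_distinct_mprof:
  assumes wf: "wf_instance n k I" and distinct: "\<And>i j. i < n \<Longrightarrow> j < n \<Longrightarrow> i \<noteq> j \<Longrightarrow> mprof I i \<noteq> mprof I j"
    and \<mu>: "stable n k I \<mu>" and \<nu>: "stable n k I \<nu>"
  shows "\<mu> = \<nu>"
proof
  fix x
  show "\<mu> x = \<nu> x"
  proof (cases "x < n")
    case True
    then show ?thesis using stable_partners_differ_imp_twins[OF wf \<mu> \<nu>] distinct by blast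
  next
    case False
    then show ?thesis
      using PiE_arb[OF matchingD(1)[OF stableD(1)[OF \<mu>]]] PiE_arb[OF matchingD(1)[OF stableD(1)[OF \<nu>]]]
      by simp
  qed
qed

text \<open>Ties only matter between equally distant partners, which distinct profiles rule out.\<close>

lemma stable_update_ties_iff:
  assumes wf: "wf_instance n k I"
    and distinct_m: "\<And>i j. i < n \<Longrightarrow> j < n \<Longrightarrow> i \<noteq> j \<Longrightarrow> mprof I i \<noteq> mprof I j"
    and distinct_w: "\<And>i j. i < n \<Longrightarrow> j < n \<Longrightarrow> i \<noteq> j \<Longrightarrow> wprof I i \<noteq> wprof I j"
  shows "stable n k (I\<lparr>mtie := S, wtie := T\<rparr>) \<nu> \<longleftrightarrow> stable n k I \<nu>"
proof (cases "matching n \<nu>")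
  case True
  let ?J = "I\<lparr>mtie := S, wtie := T\<rparr>"
  note len = wf_instance_lengths[OF wf]
  have "mprefers k ?J m a b \<longleftrightarrow> mprefers k I m a b" if "m < n" "a < n" "b < n" for m a b
  proof (cases "a = b")
    case False
    then have "dw k (mprof I m) (wprof I a) \<noteq> dw k (mprof I m) (wprof I b)"
      using dw_inj len that distinct_w by metis
    then show ?thesis unfolding mprefers_def by auto
  qed (simp add: mprefers_irrefl)
  moreover have "wprefers k ?J w a b \<longleftrightarrow> wprefers k I w a b" if "w < n" "a < n" "b < n" for w a b
  proof (cases "a = b")
    case False
    then have "dw k (wprof I w) (mprof I a) \<noteq> dw k (wprof I w) (mprof I b)"
      using dw_inj len that distinct_m by metis
    then show ?thesis unfolding wprefers_def by auto
  qed (simp add: wprefers_irrefl)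
  ultimately show ?thesis
    using True matchingD(3,4)[OF True] unfolding stable_def by meson
qed (simp add: stable_def)

lemma unique_without_ties_of_distinct_profiles:
  assumes wf: "wf_instance n k I"
    and distinct_m: "\<And>i j. i < n \<Longrightarrow> j < n \<Longrightarrow> i \<noteq> j \<Longrightarrow> mprof I i \<noteq> mprof I j"
    and distinct_w: "\<And>i j. i < n \<Longrightarrow> j < n \<Longrightarrow> i \<noteq> j \<Longrightarrow> wprof I i \<noteq> wprof I j"
  shows "unique_without_ties n k I"
proof -
  obtain \<mu> where \<mu>: "stable n k I \<mu>" using stable_exists[OF wf] by blast
  have "{\<nu>. stable n k (I\<lparr>mtie := S, wtie := T\<rparr>) \<nu>} = {\<mu>}" for S T
    using stable_update_ties_iff[OF assms] stable_unique_of_distinct_mprof[OF wf distinct_m _ \<mu>] \<mu>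
    by blast
  then show ?thesis unfolding unique_without_ties_def by blast
qed

section \<open>The random instance\<close>

definition strings :: "nat \<Rightarrow> bool list set" where
  "strings k = {xs. length xs = k}"

abbreviation uniform_string :: "nat \<Rightarrow> bool list pmf" where
  "uniform_string k \<equiv> pmf_of_set (strings k)"

lemma card_strings: "card (strings k) = 2 ^ k"
  unfolding strings_def using card_lists_length_eq[of "UNIV :: bool set" k] by simp

lemma finite_strings: "finite (strings k)"
  unfolding strings_def using finite_lists_length_eq[of "UNIV :: bool set" k] by simp

lemma strings_not_empty: "strings k \<noteq> {}"
  unfolding strings_def by (auto intro!: exI[of _ "replicate k True"])

lemma set_uniform_string: "set_pmf (uniform_string k) = strings k"
  using finite_strings strings_not_empty by simp

lemma card_strings_with_prefix:
  assumes "length p = j" "j \<le> k"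
  shows "card {b \<in> strings k. take j b = p} = 2 ^ (k - j)"
proof -
  have "{b \<in> strings k. take j b = p} = (@) p ` strings (k - j)"
  proof (intro equalityI subsetI)
    fix b assume b: "b \<in> {b \<in> strings k. take j b = p}"
    then have "b = p @ drop j b" using append_take_drop_id[of j b] by simp
    moreover have "drop j b \<in> strings (k - j)" using b by (simp add: strings_def)
    ultimately show "b \<in> (@) p ` strings (k - j)" by (rule image_eqI)
  next
    fix b assume "b \<in> (@) p ` strings (k - j)"
    then show "b \<in> {b \<in> strings k. take j b = p}" using assms by (auto simp: strings_def)
  qed
  moreover have "inj_on ((@) p) (strings (k - j))" by (simp add: inj_on_def)
  ultimately show ?thesis using card_strings by (simp add: card_image)
qed

lemma prob_uniform_string_prefix:
  assumes "length a = k" "j \<le> k"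
  shows "measure_pmf.prob (uniform_string k) {b. take j a = take j b} = (1/2) ^ j"
proof -
  have "strings k \<inter> {b. take j a = take j b} = {b \<in> strings k. take j b = take j a}" by auto
  then have "measure_pmf.prob (uniform_string k) {b. take j a = take j b} = 2 ^ (k - j) / 2 ^ k"
    using measure_pmf_of_set[OF strings_not_empty finite_strings] card_strings_with_prefix[of "take j a" j k]
      assms card_strings by simp
  also have "(2::real) ^ k = 2 ^ (k - j) * 2 ^ j"
    using assms(2) by (simp flip: power_add)
  finally show ?thesis by (simp add: power_one_over)
qed

lemma measure_bind_pmf_finite:
  assumes "finite (set_pmf M)"
  shows "measure_pmf.prob (bind_pmf M N) X = measure_pmf.expectation M (\<lambda>x. measure_pmf.prob (N x) X)"
proof -
  have "ennreal (measure_pmf.prob (bind_pmf M N) X) = (\<integral>\<^sup>+x. emeasure (N x) X \<partial>M)"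
    by (simp add: measure_pmf.emeasure_eq_measure[symmetric])
  also have "\<dots> = (\<integral>\<^sup>+x. ennreal (measure_pmf.prob (N x) X) \<partial>M)"
    by (simp add: measure_pmf.emeasure_eq_measure)
  also have "\<dots> = ennreal (measure_pmf.expectation M (\<lambda>x. measure_pmf.prob (N x) X))"
    by (rule nn_integral_eq_integral) (auto simp: integrable_measure_pmf_finite[OF assms])
  finally show ?thesis
    by (subst (asm) ennreal_inj) (auto intro: Bochner_Integration.integral_nonneg)
qed

lemma measure_pair_pmf_finite:
  assumes "finite (set_pmf M)"
  shows "measure_pmf.prob (pair_pmf M N) X = measure_pmf.expectation M (\<lambda>x. measure_pmf.prob N {y. (x, y) \<in> X})"
proof -
  have "pair_pmf M N = bind_pmf M (\<lambda>x. map_pmf (Pair x) N)"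
    unfolding pair_pmf_def map_pmf_def by simp
  then show ?thesis
    using measure_bind_pmf_finite[OF assms, of "\<lambda>x. map_pmf (Pair x) N" X] by (simp add: vimage_def)
qed

lemma expectation_const_on_support:
  fixes f :: "'a \<Rightarrow> real"
  assumes "\<And>x. x \<in> set_pmf M \<Longrightarrow> f x = c"
  shows "measure_pmf.expectation M f = c"
proof -
  have "measure_pmf.expectation M f = measure_pmf.expectation M (\<lambda>_. c)"
    using assms by (intro integral_cong_AE) (auto simp: AE_measure_pmf_iff)
  then show ?thesis by simp
qed

lemma prob_le_expectation:
  fixes g :: "'a \<Rightarrow> real"
  assumes fin: "finite (set_pmf M)" and ge: "\<And>x. x \<in> set_pmf M \<Longrightarrow> x \<in> A \<Longrightarrow> 1 \<le> g x"
    and nonneg: "\<And>x. x \<in> set_pmf M \<Longrightarrow> 0 \<le> g x"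
  shows "measure_pmf.prob M A \<le> measure_pmf.expectation M g"
proof -
  have "measure_pmf.prob M A = measure_pmf.expectation M (indicator A)" by simp
  also have "\<dots> \<le> measure_pmf.expectation M g"
    using ge nonneg by (intro integral_mono_AE)
      (auto simp: integrable_measure_pmf_finite[OF fin] AE_measure_pmf_iff split: split_indicator)
  finally show ?thesis .
qed

lemma expectation_mono_finite:
  fixes f g :: "'a \<Rightarrow> real"
  assumes "finite (set_pmf M)" and "\<And>x. x \<in> set_pmf M \<Longrightarrow> f x \<le> g x"
  shows "measure_pmf.expectation M f \<le> measure_pmf.expectation M g"
  using assms by (intro integral_mono_AE) (auto simp: integrable_measure_pmf_finite AE_measure_pmf_iff)

lemma prob_pair_uniform_strings_same_prefix:
  assumes "j \<le> k"
  shows "measure_pmf.prob (pair_pmf (uniform_string k) (uniform_string k)) {(a, b). take j a = take j b} = (1/2) ^ j"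
  using assms prob_uniform_string_prefix set_uniform_string finite_strings
  by (subst measure_pair_pmf_finite) (auto intro!: expectation_const_on_support simp: strings_def)

lemma profiles_pmf_uniform: "profiles_pmf n k = Pi_pmf {..<n} [] (\<lambda>_. uniform_string k)"
  unfolding profiles_pmf_def strings_def by simp

lemma map_profiles_pmf_component:
  "i < n \<Longrightarrow> map_pmf (\<lambda>f. f i) (profiles_pmf n k) = uniform_string k"
  unfolding profiles_pmf_uniform by (subst Pi_pmf_component) auto

lemma map_profiles_pmf_pair:
  assumes "i < n" "i' < n" "i \<noteq> i'"
  shows "map_pmf (\<lambda>f. (f i, f i')) (profiles_pmf n k) = pair_pmf (uniform_string k) (uniform_string k)"
proof -
  let ?A = "{..<n} - {i}" and ?U = "uniform_string k"
  have A: "{..<n} = insert i ?A" using assms by auto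
  have "profiles_pmf n k = map_pmf (\<lambda>(y, f). f(i := y)) (pair_pmf ?U (Pi_pmf ?A [] (\<lambda>_. ?U)))"
    unfolding profiles_pmf_uniform by (subst A, subst Pi_pmf_insert) auto
  then have "map_pmf (\<lambda>f. (f i, f i')) (profiles_pmf n k) =
      map_pmf (\<lambda>(y, f). (y, f i')) (pair_pmf ?U (Pi_pmf ?A [] (\<lambda>_. ?U)))"
    using assms by (simp add: pmf.map_comp o_def case_prod_unfold)
  also have "\<dots> = pair_pmf ?U (map_pmf (\<lambda>f. f i') (Pi_pmf ?A [] (\<lambda>_. ?U)))"
    by (simp add: pair_map_pmf2 apsnd_def map_prod_def case_prod_unfold)
  also have "map_pmf (\<lambda>f. f i') (Pi_pmf ?A [] (\<lambda>_. ?U)) = ?U"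
    using assms by (subst Pi_pmf_component) auto
  finally show ?thesis .
qed

lemma set_profiles_pmf: "set_pmf (profiles_pmf n k) = PiE_dflt {..<n} [] (\<lambda>_. strings k)"
  unfolding profiles_pmf_uniform by (subst set_Pi_pmf) (auto simp: set_uniform_string o_def)

lemma finite_profiles_pmf: "finite (set_pmf (profiles_pmf n k))"
  unfolding set_profiles_pmf by (rule finite_PiE_dflt) (auto simp: finite_strings)

lemma finite_rankings: "finite (rankings n)"
proof -
  have "rankings n \<subseteq> {..<n} \<rightarrow>\<^sub>E {..<n}" unfolding rankings_def by auto
  then show ?thesis by (rule finite_subset) (auto intro: finite_PiE)
qed

lemma rankings_not_empty: "rankings n \<noteq> {}"
proof -
  have "restrict id {..<n} \<in> rankings n"
    unfolding rankings_def by (auto simp: bij_betw_def inj_on_def)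
  then show ?thesis by blast
qed

lemma set_ties_pmf: "set_pmf (ties_pmf n) = PiE_dflt {..<n} (\<lambda>_. 0) (\<lambda>_. rankings n)"
  unfolding ties_pmf_def
  by (subst set_Pi_pmf) (auto simp: set_pmf_of_set[OF rankings_not_empty finite_rankings] o_def)

lemma finite_ties_pmf: "finite (set_pmf (ties_pmf n))"
  unfolding set_ties_pmf by (rule finite_PiE_dflt) (auto simp: finite_rankings)

lemma set_rpmp_pmf:
  "set_pmf (rpmp_pmf n k) = (\<lambda>(A, B, S, T). \<lparr>mprof = A, wprof = B, mtie = S, wtie = T\<rparr>) `
    (set_pmf (profiles_pmf n k) \<times> set_pmf (profiles_pmf n k) \<times> set_pmf (ties_pmf n) \<times> set_pmf (ties_pmf n))"
  unfolding rpmp_pmf_def by (auto simp: image_iff)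

lemma finite_rpmp_pmf: "finite (set_pmf (rpmp_pmf n k))"
  unfolding set_rpmp_pmf using finite_profiles_pmf finite_ties_pmf by auto

lemma wf_instance_rpmp_pmf: "I \<in> set_pmf (rpmp_pmf n k) \<Longrightarrow> wf_instance n k I"
  unfolding set_rpmp_pmf wf_instance_def set_profiles_pmf set_ties_pmf by (auto simp: PiE_dflt_def strings_def)

lemma map_rpmp_pmf_profiles:
  "map_pmf (\<lambda>I. (mprof I, wprof I)) (rpmp_pmf n k) = pair_pmf (profiles_pmf n k) (profiles_pmf n k)"
  unfolding rpmp_pmf_def pair_pmf_def by (simp add: map_bind_pmf bind_pmf_const)

lemma expectation_rpmp_pmf_profiles:
  fixes h :: "_ \<Rightarrow> real"
  shows "measure_pmf.expectation (rpmp_pmf n k) (\<lambda>I. h (mprof I, wprof I)) =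
    measure_pmf.expectation (pair_pmf (profiles_pmf n k) (profiles_pmf n k)) h"
  using integral_map_pmf[of "\<lambda>I. (mprof I, wprof I)" "rpmp_pmf n k" h] map_rpmp_pmf_profiles by simp

section \<open>Counting pairs of profiles with a common prefix\<close>

definition same_prefix_pairs :: "nat \<Rightarrow> nat \<Rightarrow> (nat \<Rightarrow> bool list) \<Rightarrow> (nat \<Rightarrow> bool list) \<Rightarrow> real" where
  "same_prefix_pairs n j f g = (\<Sum>i<n. \<Sum>i'<n. if take j (f i) = take j (g i') then 1 else 0)"

lemma real_card_eq_sum_if: "finite A \<Longrightarrow> real (card {x\<in>A. P x}) = (\<Sum>x\<in>A. if P x then 1 else 0)"
  by (simp add: sum.inter_filter[symmetric])

lemma card_with_twin_le:
  assumes "\<And>i. i < n \<Longrightarrow> P i \<Longrightarrow> \<exists>i'<n. i' \<noteq> i \<and> f i' = f i"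
  shows "real (card {i\<in>{..<n}. P i}) \<le> same_prefix_pairs n j f f - real n"
proof -
  define c where "c i i' = (if take j (f i) = take j (f i') then 1 else (0::real))" for i i'
  have "(if P i then 1 else 0) \<le> (\<Sum>i'<n. c i i') - 1" if i: "i < n" for i
  proof -
    have split: "(\<Sum>i'<n. c i i') = 1 + (\<Sum>i'\<in>{..<n} - {i}. c i i')"
      using i by (simp add: sum.remove[of "{..<n}" i] c_def)
    have "(if P i then 1 else 0) \<le> (\<Sum>i'\<in>{..<n} - {i}. c i i')"
    proof (cases "P i")
      case True
      then obtain i' where "i' < n" "i' \<noteq> i" "f i' = f i" using assms i by blast
      then show ?thesis using True member_le_sum[of i' "{..<n} - {i}" "c i"] by (simp add: c_def)
    qed (simp add: sum_nonneg c_def)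
    then show ?thesis using split by simp
  qed
  then have "(\<Sum>i<n. if P i then 1 else 0) \<le> (\<Sum>i<n. (\<Sum>i'<n. c i i') - 1)"
    by (intro sum_mono) simp
  moreover have "real (card {i\<in>{..<n}. P i}) = (\<Sum>i<n. if P i then 1 else 0)"
    by (rule real_card_eq_sum_if) simp
  ultimately show ?thesis
    unfolding same_prefix_pairs_def c_def by (simp add: sum_subtractf)
qed

lemma same_prefix_pairs_self_ge: "real n \<le> same_prefix_pairs n j f f"
  using card_with_twin_le[of n "\<lambda>_. False" f j] by simp

lemma expectation_pair_uniform_same_prefix:
  assumes "j \<le> k"
  shows "measure_pmf.expectation (pair_pmf (uniform_string k) (uniform_string k))
           (\<lambda>(a, b). if take j a = take j b then 1 else 0) = ((1/2) ^ j :: real)"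
proof -
  have ind: "(\<lambda>(a, b). if take j a = take j b then 1 else 0 :: real) = indicator {(a, b). take j a = take j b}"
    by (auto simp: fun_eq_iff split: split_indicator)
  show ?thesis unfolding ind using prob_pair_uniform_strings_same_prefix[OF assms] by simp
qed

lemma expectation_same_prefix_pairs_self:
  assumes "j \<le> k"
  shows "measure_pmf.expectation (profiles_pmf n k) (\<lambda>f. same_prefix_pairs n j f f)
           = real n + real n * (real n - 1) * (1/2) ^ j"
proof -
  let ?P = "profiles_pmf n k"
  define e where "e i i' = measure_pmf.expectation ?P (\<lambda>f. if take j (f i) = take j (f i') then 1 else (0::real))"
    for i i'
  have offdiag: "e i i' = (1/2) ^ j" if "i < n" "i' < n" "i \<noteq> i'" for i i'
    using integral_map_pmf[of "\<lambda>f. (f i, f i')" ?P "\<lambda>(a, b). if take j a = take j b then 1 else (0::real)"]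
      map_profiles_pmf_pair[OF that] expectation_pair_uniform_same_prefix[OF assms] unfolding e_def by simp
  have "measure_pmf.expectation ?P (\<lambda>f. same_prefix_pairs n j f f) = (\<Sum>i<n. \<Sum>i'<n. e i i')"
    unfolding same_prefix_pairs_def e_def
    by (simp add: Bochner_Integration.integral_sum integrable_measure_pmf_finite[OF finite_profiles_pmf])
  also have "\<dots> = (\<Sum>i<n. 1 + (real n - 1) * (1/2) ^ j)"
  proof (rule sum.cong[OF refl])
    fix i assume i: "i \<in> {..<n}"
    have "(\<Sum>i'<n. e i i') = e i i + (\<Sum>i'\<in>{..<n} - {i}. e i i')"
      using i by (simp add: sum.remove[of "{..<n}" i])
    also have "\<dots> = 1 + (\<Sum>i'\<in>{..<n} - {i}. (1/2) ^ j)"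
      using offdiag i by (simp add: e_def)
    finally show "(\<Sum>i'<n. e i i') = 1 + (real n - 1) * (1/2) ^ j"
      using i by (simp add: card_Diff_singleton of_nat_diff)
  qed
  also have "\<dots> = real n + real n * (real n - 1) * (1/2) ^ j" by (simp add: algebra_simps)
  finally show ?thesis .
qed

lemma expectation_same_prefix_pairs_indep:
  assumes "j \<le> k"
  shows "measure_pmf.expectation (pair_pmf (profiles_pmf n k) (profiles_pmf n k))
           (\<lambda>(f, g). same_prefix_pairs n j f g) = real n * real n * (1/2) ^ j"
proof -
  let ?Q = "pair_pmf (profiles_pmf n k) (profiles_pmf n k)"
  have pair: "measure_pmf.expectation ?Q (\<lambda>(f, g). if take j (f i) = take j (g i') then 1 else (0::real))
      = (1/2) ^ j" if "i < n" "i' < n" for i i'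
  proof -
    have "map_pmf (\<lambda>(f, g). (f i, g i')) ?Q = pair_pmf (uniform_string k) (uniform_string k)"
      using map_pair[of "\<lambda>f. f i" "\<lambda>g. g i'" "profiles_pmf n k" "profiles_pmf n k"]
        map_profiles_pmf_component[OF that(1), of k] map_profiles_pmf_component[OF that(2), of k] by simp
    then show ?thesis
      using integral_map_pmf[of "\<lambda>(f, g). (f i, g i')" ?Q "\<lambda>(a, b). if take j a = take j b then 1 else (0::real)"]
        expectation_pair_uniform_same_prefix[OF assms] by (simp add: case_prod_unfold)
  qed
  have "measure_pmf.expectation ?Q (\<lambda>(f, g). same_prefix_pairs n j f g) =
      (\<Sum>i<n. \<Sum>i'<n. measure_pmf.expectation ?Q (\<lambda>(f, g). if take j (f i) = take j (g i') then 1 else (0::real)))"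
    unfolding same_prefix_pairs_def
    by (simp add: case_prod_unfold Bochner_Integration.integral_sum integrable_measure_pmf_finite finite_profiles_pmf)
  also have "\<dots> = real n * real n * (1/2) ^ j" using pair by simp
  finally show ?thesis .
qed

lemma card_close_partners_le:
  assumes "\<And>m. m < n \<Longrightarrow> \<mu> m < n"
  shows "real (card {m\<in>{..<n}. take j (a m) = take j (b (\<mu> m))}) \<le> same_prefix_pairs n j a b"
proof -
  have "real (card {m\<in>{..<n}. take j (a m) = take j (b (\<mu> m))})
      = (\<Sum>m<n. if take j (a m) = take j (b (\<mu> m)) then 1 else 0)"
    by (rule real_card_eq_sum_if) simp
  also have "\<dots> \<le> same_prefix_pairs n j a b"
    unfolding same_prefix_pairs_def
  proof (rule sum_mono)
    fix m assume "m \<in> {..<n}"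
    then show "(if take j (a m) = take j (b (\<mu> m)) then 1 else 0) \<le> (\<Sum>i'<n. if take j (a m) = take j (b i') then 1 else (0::real))"
      using assms member_le_sum[of "\<mu> m" "{..<n}" "\<lambda>i'. if take j (a m) = take j (b i') then 1 else (0::real)"]
      by (auto simp: sum_nonneg)
  qed
  finally show ?thesis .
qed

definition prefix_surplus :: "nat \<Rightarrow> nat \<Rightarrow> (nat \<Rightarrow> bool list) \<Rightarrow> (nat \<Rightarrow> bool list) \<Rightarrow> bool list \<Rightarrow> real" where
  "prefix_surplus n j a b B = real (card {m\<in>{..<n}. take j (a m) = B}) - real (card {w\<in>{..<n}. take j (b w) = B})"

text \<open>Otherwise \<open>m\<^sub>0\<close> and \<open>w\<close> would form a blocking pair.\<close>

lemma stable_prefix_class_closed: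
  assumes wf: "wf_instance n k I" and \<mu>: "stable n k I \<mu>" and j: "j \<le> k"
    and m0: "m0 < n" "take j (mprof I m0) = B" "take j (wprof I (\<mu> m0)) \<noteq> B"
    and w: "w < n" "take j (wprof I w) = B"
  shows "take j (mprof I (inv_into {..<n} \<mu> w)) = B"
proof (rule ccontr)
  assume outside: "take j (mprof I (inv_into {..<n} \<mu> w)) \<noteq> B"
  note M = matchingD[OF stableD(1)[OF \<mu>]] and len = wf_instance_lengths[OF wf]
  have "dw k (mprof I m0) (wprof I w) < (1/2) ^ j"
    using dw_less_half_power_iff[OF len(1)[OF m0(1)] len(2)[OF w(1)] j] m0 w by simp
  moreover have "\<not> dw k (mprof I m0) (wprof I (\<mu> m0)) < (1/2) ^ j"
    using dw_less_half_power_iff[OF len(1)[OF m0(1)] len(2)[OF M(3)[OF m0(1)]] j] m0 by simp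
  moreover have "\<not> dw k (wprof I w) (mprof I (inv_into {..<n} \<mu> w)) < (1/2) ^ j"
    using dw_less_half_power_iff[OF len(2)[OF w(1)] len(1)[OF M(4)[OF w(1)]] j] outside w by simp
  ultimately have "mprefers k I m0 w (\<mu> m0)" "wprefers k I w m0 (inv_into {..<n} \<mu> w)"
    unfolding mprefers_def wprefers_def by (auto simp: dw_commute)
  then show False using stableD(2)[OF \<mu> m0(1) w(1)] by blast
qed

lemma card_leaving_prefix_class_le:
  assumes wf: "wf_instance n k I" and \<mu>: "stable n k I \<mu>" and j: "j \<le> k"
  shows "real (card {m\<in>{..<n}. take j (mprof I m) = B \<and> take j (wprof I (\<mu> m)) \<noteq> B})
    \<le> \<bar>prefix_surplus n j (mprof I) (wprof I) B\<bar>"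
proof -
  define Out where "Out = {m\<in>{..<n}. take j (mprof I m) = B \<and> take j (wprof I (\<mu> m)) \<noteq> B}"
  define Men where "Men = {m\<in>{..<n}. take j (mprof I m) = B}"
  define Women where "Women = {w\<in>{..<n}. take j (wprof I w) = B}"
  note M = matchingD[OF stableD(1)[OF \<mu>]]
  show ?thesis
  proof (cases "Out = {}")
    case False
    then obtain m0 where m0: "m0 < n" "take j (mprof I m0) = B" "take j (wprof I (\<mu> m0)) \<noteq> B"
      unfolding Out_def by auto
    have "inv_into {..<n} \<mu> w \<in> Men - Out" if "w \<in> Women" for w
    proof -
      have w: "w < n" "take j (wprof I w) = B" using that by (auto simp: Women_def)
      then have "inv_into {..<n} \<mu> w < n" "\<mu> (inv_into {..<n} \<mu> w) = w" using M(4,5) by blast+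
      then show ?thesis
        using stable_prefix_class_closed[OF wf \<mu> j m0 w] w unfolding Men_def Out_def by simp
    qed
    then have "card (inv_into {..<n} \<mu> ` Women) \<le> card (Men - Out)"
      by (intro card_mono) (auto simp: Men_def)
    moreover have "inj_on (inv_into {..<n} \<mu>) Women"
      using M(2) by (intro inj_on_inv_into) (auto simp: bij_betw_def Women_def)
    ultimately have "card Women \<le> card (Men - Out)" by (simp add: card_image)
    moreover have "Out \<subseteq> Men" "finite Men" unfolding Out_def Men_def by auto
    then have "card (Men - Out) = card Men - card Out" "card Out \<le> card Men"
      by (auto intro: card_Diff_subset card_mono finite_subset)
    ultimately have "card Out + card Women \<le> card Men" by linarith
    then show ?thesis unfolding prefix_surplus_def Out_def[symmetric] Men_def[symmetric] Women_def[symmetric]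
      by linarith
  qed (simp only: Out_def[symmetric], simp)
qed

lemma card_far_partners_le:
  assumes wf: "wf_instance n k I" and \<mu>: "stable n k I \<mu>" and j: "j \<le> k"
  shows "real (card {m\<in>{..<n}. take j (mprof I m) \<noteq> take j (wprof I (\<mu> m))})
    \<le> (\<Sum>B\<in>strings j. \<bar>prefix_surplus n j (mprof I) (wprof I) B\<bar>)"
proof -
  define Out where "Out B = {m\<in>{..<n}. take j (mprof I m) = B \<and> take j (wprof I (\<mu> m)) \<noteq> B}" for B
  have "{m\<in>{..<n}. take j (mprof I m) \<noteq> take j (wprof I (\<mu> m))} = (\<Union>B\<in>strings j. Out B)"
    using wf_instance_lengths(1)[OF wf] j unfolding Out_def strings_def by auto
  moreover have "card (\<Union>B\<in>strings j. Out B) = (\<Sum>B\<in>strings j. card (Out B))"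
    by (rule card_UN_disjoint) (auto simp: finite_strings Out_def)
  ultimately have "real (card {m\<in>{..<n}. take j (mprof I m) \<noteq> take j (wprof I (\<mu> m))})
      = (\<Sum>B\<in>strings j. real (card (Out B)))" by simp
  also have "\<dots> \<le> (\<Sum>B\<in>strings j. \<bar>prefix_surplus n j (mprof I) (wprof I) B\<bar>)"
    unfolding Out_def by (intro sum_mono card_leaving_prefix_class_le[OF wf \<mu> j])
  finally show ?thesis .
qed

text \<open>Counting pairs class by class: a pair has a common prefix of length \<open>j\<close> iff both
  members lie in the same class \<open>B\<close>.\<close>

lemma sum_prefix_class_products:
  assumes "\<And>i. i < n \<Longrightarrow> j \<le> length (u i)"
  shows "(\<Sum>B\<in>strings j. real (card {i\<in>{..<n}. take j (u i) = B}) * real (card {i\<in>{..<n}. take j (v i) = B}))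
     = same_prefix_pairs n j u v"
proof -
  have "(\<Sum>B\<in>strings j. (if take j (u i) = B then 1 else 0) * (if take j (v i') = B then 1 else (0::real)))
      = (if take j (u i) = take j (v i') then 1 else 0)" if "i < n" for i i'
  proof -
    have "(\<Sum>B\<in>strings j. (if take j (u i) = B then 1 else 0) * (if take j (v i') = B then 1 else (0::real)))
        = (\<Sum>B\<in>strings j. if B = take j (u i) then (if take j (v i') = B then 1 else 0) else 0)"
      by (intro sum.cong) auto
    also have "\<dots> = (if take j (u i) = take j (v i') then 1 else 0)"
      using assms[OF that] finite_strings[of j] by (subst sum.delta) (auto simp: strings_def)
    finally show ?thesis .
  qed
  then have "(\<Sum>B\<in>strings j. (\<Sum>i<n. if take j (u i) = B then 1 else 0) * (\<Sum>i'<n. if take j (v i') = B then 1 else (0::real)))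
      = same_prefix_pairs n j u v"
    unfolding same_prefix_pairs_def sum_product
    by (subst sum.swap, subst sum.swap) (simp add: sum.swap[of _ "strings j"])
  then show ?thesis by (simp only: real_card_eq_sum_if[OF finite_lessThan])
qed

lemma sum_prefix_surplus_squared:
  assumes "\<And>i. i < n \<Longrightarrow> j \<le> length (a i)" "\<And>i. i < n \<Longrightarrow> j \<le> length (b i)"
  shows "(\<Sum>B\<in>strings j. (prefix_surplus n j a b B)\<^sup>2)
    = same_prefix_pairs n j a a + same_prefix_pairs n j b b - 2 * same_prefix_pairs n j a b"
proof -
  define ca where "ca B = real (card {i\<in>{..<n}. take j (a i) = B})" for B
  define cb where "cb B = real (card {i\<in>{..<n}. take j (b i) = B})" for B
  have "(\<Sum>B\<in>strings j. (prefix_surplus n j a b B)\<^sup>2)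
      = (\<Sum>B\<in>strings j. ca B * ca B) + (\<Sum>B\<in>strings j. cb B * cb B) - 2 * (\<Sum>B\<in>strings j. ca B * cb B)"
    unfolding prefix_surplus_def ca_def[symmetric] cb_def[symmetric]
    by (simp add: power2_eq_square algebra_simps sum.distrib sum_subtractf sum_distrib_left)
  then show ?thesis
    unfolding ca_def cb_def using sum_prefix_class_products assms by simp
qed

lemma sum_abs_squared_le:
  fixes D :: "bool list \<Rightarrow> real"
  shows "(\<Sum>B\<in>strings j. \<bar>D B\<bar>)\<^sup>2 \<le> 2 ^ j * (\<Sum>B\<in>strings j. (D B)\<^sup>2)"
  using Cauchy_Schwarz_ineq_sum[of "\<lambda>B. \<bar>D B\<bar>" "\<lambda>_. 1" "strings j"]
  by (simp add: card_strings mult.commute)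

lemma card_far_partners_squared_le:
  assumes wf: "wf_instance n k I" and \<mu>: "stable n k I \<mu>" and j: "j \<le> k"
  shows "(real (card {m\<in>{..<n}. take j (mprof I m) \<noteq> take j (wprof I (\<mu> m))}))\<^sup>2
    \<le> 2 ^ j * (same_prefix_pairs n j (mprof I) (mprof I) + same_prefix_pairs n j (wprof I) (wprof I)
               - 2 * same_prefix_pairs n j (mprof I) (wprof I))"
proof -
  let ?D = "prefix_surplus n j (mprof I) (wprof I)"
  have "(real (card {m\<in>{..<n}. take j (mprof I m) \<noteq> take j (wprof I (\<mu> m))}))\<^sup>2
      \<le> (\<Sum>B\<in>strings j. \<bar>?D B\<bar>)\<^sup>2"
    using card_far_partners_le[OF assms] by (simp add: power_mono)
  also have "\<dots> \<le> 2 ^ j * (\<Sum>B\<in>strings j. (?D B)\<^sup>2)" by (rule sum_abs_squared_le)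
  also have "(\<Sum>B\<in>strings j. (?D B)\<^sup>2) = same_prefix_pairs n j (mprof I) (mprof I)
      + same_prefix_pairs n j (wprof I) (wprof I) - 2 * same_prefix_pairs n j (mprof I) (wprof I)"
    using wf_instance_lengths[OF wf] j by (intro sum_prefix_surplus_squared) auto
  finally show ?thesis .
qed

section \<open>Estimates for fixed \<open>n\<close>\<close>

text \<open>Ordered pairs of distinct men, or of distinct women, with identical profiles.\<close>

definition profile_collisions :: "nat \<Rightarrow> nat \<Rightarrow> rinstance \<Rightarrow> real" where
  "profile_collisions n k I =
     same_prefix_pairs n k (mprof I) (mprof I) + same_prefix_pairs n k (wprof I) (wprof I) - 2 * real n"

lemma profile_collisions_nonneg: "0 \<le> profile_collisions n k I"
  using same_prefix_pairs_self_ge[of n k "mprof I"] same_prefix_pairs_self_ge[of n k "wprof I"]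
  unfolding profile_collisions_def by simp

lemma expectation_profile_collisions:
  "measure_pmf.expectation (rpmp_pmf n k) (profile_collisions n k) = 2 * real n * (real n - 1) * (1/2) ^ k"
proof -
  let ?P = "profiles_pmf n k"
  have "measure_pmf.expectation (rpmp_pmf n k) (profile_collisions n k) =
      measure_pmf.expectation (pair_pmf ?P ?P)
        (\<lambda>x. same_prefix_pairs n k (fst x) (fst x) + same_prefix_pairs n k (snd x) (snd x) - 2 * real n)"
    unfolding profile_collisions_def
    by (rule expectation_rpmp_pmf_profiles[where h="\<lambda>x. same_prefix_pairs n k (fst x) (fst x)
        + same_prefix_pairs n k (snd x) (snd x) - 2 * real n", simplified])
  also have "\<dots> = 2 * measure_pmf.expectation ?P (\<lambda>f. same_prefix_pairs n k f f) - 2 * real n"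
    using expectation_pair_pmf_fst[of ?P ?P "\<lambda>f. same_prefix_pairs n k f f"]
      expectation_pair_pmf_snd[of ?P ?P "\<lambda>f. same_prefix_pairs n k f f"]
    by (simp add: integrable_measure_pmf_finite finite_profiles_pmf)
  also have "\<dots> = 2 * real n * (real n - 1) * (1/2) ^ k"
    by (simp add: expectation_same_prefix_pairs_self algebra_simps)
  finally show ?thesis .
qed

lemma frac_multi_le_profile_collisions:
  assumes wf: "wf_instance n k I"
  shows "frac_multi n k I \<le> profile_collisions n k I / real (2 * n)"
proof -
  have "real (card {m\<in>{..<n}. 2 \<le> card (man_stable_partners n k I m)})
      \<le> same_prefix_pairs n k (mprof I) (mprof I) - real n"
    by (rule card_with_twin_le) (use man_multiple_stable_partners_imp_twin[OF wf] in blast)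
  moreover have "real (card {w\<in>{..<n}. 2 \<le> card (woman_stable_partners n k I w)})
      \<le> same_prefix_pairs n k (wprof I) (wprof I) - real n"
    by (rule card_with_twin_le) (use woman_multiple_stable_partners_imp_twin[OF wf] in blast)
  ultimately show ?thesis
    unfolding frac_multi_def profile_collisions_def by (intro divide_right_mono) auto
qed

lemma not_unique_without_ties_imp_collision:
  assumes wf: "wf_instance n k I" and "\<not> unique_without_ties n k I"
  shows "1 \<le> profile_collisions n k I"
proof -
  have twin: "1 \<le> same_prefix_pairs n k f f - real n" if has_twin: "\<exists>i<n. \<exists>i'<n. i' \<noteq> i \<and> f i' = f i" for f
  proof -
    obtain i0 where i0: "i0 < n" "\<exists>i'<n. i' \<noteq> i0 \<and> f i' = f i0" using has_twin by blast
    then have "real (card {i\<in>{..<n}. i = i0}) \<le> same_prefix_pairs n k f f - real n"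
      by (intro card_with_twin_le) auto
    moreover have "{i\<in>{..<n}. i = i0} = {i0}" using i0 by auto
    ultimately show ?thesis by simp
  qed
  consider "\<exists>i<n. \<exists>i'<n. i' \<noteq> i \<and> mprof I i' = mprof I i" | "\<exists>i<n. \<exists>i'<n. i' \<noteq> i \<and> wprof I i' = wprof I i"
    using unique_without_ties_of_distinct_profiles[OF wf] assms(2) by blast
  then show ?thesis
  proof cases
    case 1
    then show ?thesis using twin[OF 1] same_prefix_pairs_self_ge[of n k "wprof I"]
      unfolding profile_collisions_def by linarith
  next
    case 2
    then show ?thesis using twin[OF 2] same_prefix_pairs_self_ge[of n k "mprof I"]
      unfolding profile_collisions_def by linarith
  qed
qed

lemma prob_frac_multi_gt_le:
  assumes n: "n > 0" and \<delta>: "\<delta> > 0"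
  shows "measure_pmf.prob (rpmp_pmf n k) {I. frac_multi n k I > \<delta>} \<le> real n * (1/2) ^ k / \<delta>"
proof -
  have "measure_pmf.prob (rpmp_pmf n k) {I. frac_multi n k I > \<delta>}
      \<le> measure_pmf.expectation (rpmp_pmf n k) (\<lambda>I. profile_collisions n k I / (real (2 * n) * \<delta>))"
  proof (rule prob_le_expectation[OF finite_rpmp_pmf])
    fix I assume "I \<in> set_pmf (rpmp_pmf n k)"
    from frac_multi_le_profile_collisions[OF wf_instance_rpmp_pmf[OF this]]
    have "frac_multi n k I / \<delta> \<le> profile_collisions n k I / (real (2 * n) * \<delta>)"
      using \<delta> by (simp add: divide_right_mono field_simps)
    moreover assume "I \<in> {I. frac_multi n k I > \<delta>}"
    then have "1 < frac_multi n k I / \<delta>" using \<delta> by simp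
    ultimately show "1 \<le> profile_collisions n k I / (real (2 * n) * \<delta>)" by simp
  qed (use profile_collisions_nonneg \<delta> in simp)
  also have "\<dots> = 2 * real n * (real n - 1) * (1/2) ^ k / (real (2 * n) * \<delta>)"
    by (simp add: expectation_profile_collisions)
  also have "\<dots> \<le> real n * (1/2) ^ k / \<delta>"
    using n \<delta> by (simp add: field_simps)
  finally show ?thesis .
qed

lemma prob_unique_without_ties_ge:
  "measure_pmf.prob (rpmp_pmf n k) {I. unique_without_ties n k I} \<ge> 1 - 2 * real n * real n * (1/2) ^ k"
proof -
  let ?U = "{I. unique_without_ties n k I}"
  have "measure_pmf.prob (rpmp_pmf n k) (UNIV - ?U)
      \<le> measure_pmf.expectation (rpmp_pmf n k) (profile_collisions n k)"
    by (rule prob_le_expectation[OF finite_rpmp_pmf])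
      (auto intro: not_unique_without_ties_imp_collision wf_instance_rpmp_pmf profile_collisions_nonneg)
  also have "\<dots> \<le> 2 * real n * real n * (1/2) ^ k"
    by (simp add: expectation_profile_collisions mult_left_mono)
  finally show ?thesis using measure_pmf.prob_compl[of ?U "rpmp_pmf n k"] by simp
qed

lemma two_powr_mult_log: "x > 0 \<Longrightarrow> 2 powr (c * log 2 x) = x powr c"
  by (simp add: powr_powr[symmetric] mult.commute[of c])

lemma log_ratio_far_from_minus_one:
  fixes X x \<delta> :: real
  assumes X: "X \<ge> 0" and x: "x > 1" and far: "\<bar>log 2 X / log 2 x + 1\<bar> > \<delta>"
  shows "X < x powr (-1 - \<delta>) \<or> X > x powr (-1 + \<delta>)"
proof (cases "X = 0")
  case False
  then have X: "X > 0" using X by simp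
  have L: "log 2 x > 0" using x by simp
  consider "log 2 X / log 2 x + 1 > \<delta>" | "log 2 X / log 2 x + 1 < - \<delta>" using far by linarith
  then show ?thesis
  proof cases
    case 1
    then have "log 2 X > (-1 + \<delta>) * log 2 x" using L by (simp add: field_simps)
    then have "2 powr ((-1 + \<delta>) * log 2 x) < X" using X by (simp add: less_log_iff)
    then show ?thesis using two_powr_mult_log[of x] x by simp
  next
    case 2
    then have "log 2 X < (-1 - \<delta>) * log 2 x" using L by (simp add: field_simps)
    then have "X < 2 powr ((-1 - \<delta>) * log 2 x)" using X by (simp add: log_less_iff)
    then show ?thesis using two_powr_mult_log[of x] x by simp
  qed
qed (use x in simp)

lemma log_dw_far_imp_prefix_condition:
  fixes x \<delta> :: real
  assumes x: "x > 1" and j1: "j1 \<le> k" and j2: "j2 \<le> k"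
    and h1: "x powr (-1 - \<delta>) \<le> (1/2) ^ j1" and h2: "(1/2) ^ j2 \<le> x powr (-1 + \<delta>)"
    and a: "length a = k" and b: "length b = k"
    and far: "\<bar>log 2 (dw k a b) / log 2 x + 1\<bar> > \<delta>"
  shows "take j1 a = take j1 b \<or> take j2 a \<noteq> take j2 b"
proof -
  consider "dw k a b < x powr (-1 - \<delta>)" | "dw k a b > x powr (-1 + \<delta>)"
    using log_ratio_far_from_minus_one[OF dw_nonneg x far] by blast
  then show ?thesis
  proof cases
    case 1
    then have "dw k a b < (1/2) ^ j1" using h1 by simp
    then show ?thesis using dw_less_half_power_iff[OF a b j1] by simp
  next
    case 2
    then have "\<not> dw k a b < (1/2) ^ j2" using h2 by simp
    then show ?thesis using dw_less_half_power_iff[OF a b j2] by simp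
  qed
qed

lemma card_participants: "card (Inl ` {..<n} \<union> Inr ` {..<n} :: (nat + nat) set) = 2 * n"
  by (subst card_Un_disjoint) (auto simp: card_image)

lemma card_participants_le_matched_men:
  assumes \<mu>: "matching n \<mu>"
    and men: "\<And>m. m < n \<Longrightarrow> P (Inl m) \<Longrightarrow> Q m"
    and women: "\<And>w. w < n \<Longrightarrow> P (Inr w) \<Longrightarrow> Q (inv_into {..<n} \<mu> w)"
  shows "card {x \<in> Inl ` {..<n} \<union> Inr ` {..<n}. P x} \<le> 2 * card {m\<in>{..<n}. Q m}"
proof -
  let ?C = "{m\<in>{..<n}. Q m}"
  note M = matchingD[OF \<mu>]
  have "{x \<in> Inl ` {..<n} \<union> Inr ` {..<n}. P x} \<subseteq> Inl ` ?C \<union> Inr ` (\<mu> ` ?C)"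
  proof
    fix x assume x: "x \<in> {x \<in> Inl ` {..<n} \<union> Inr ` {..<n}. P x}"
    show "x \<in> Inl ` ?C \<union> Inr ` (\<mu> ` ?C)"
    proof (cases x)
      case (Inr w)
      then have "w < n" "Q (inv_into {..<n} \<mu> w)" using x women by auto
      moreover have "inv_into {..<n} \<mu> w < n" "\<mu> (inv_into {..<n} \<mu> w) = w" using M(4,5) \<open>w < n\<close> by auto
      ultimately have "w \<in> \<mu> ` ?C" by (intro image_eqI[of w \<mu> "inv_into {..<n} \<mu> w"]) auto
      then show ?thesis using Inr by blast
    qed (use x men in auto)
  qed
  then have "card {x \<in> Inl ` {..<n} \<union> Inr ` {..<n}. P x} \<le> card (Inl ` ?C \<union> Inr ` (\<mu> ` ?C))"
    by (intro card_mono) auto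
  also have "\<dots> \<le> card (Inl ` ?C :: (nat + nat) set) + card (Inr ` (\<mu> ` ?C) :: (nat + nat) set)"
    by (rule card_Un_le)
  also have "\<dots> \<le> card ?C + card ?C"
    by (intro add_mono card_image_le order_trans[OF card_image_le card_image_le]) auto
  finally show ?thesis by simp
qed

lemma le_add_square_div: "0 \<le> t \<Longrightarrow> (\<eta>::real) > 0 \<Longrightarrow> t \<le> \<eta> + t\<^sup>2 / \<eta>"
proof -
  assume t: "0 \<le> t" and \<eta>: "\<eta> > 0"
  have "0 \<le> t * \<eta>" using t \<eta> by simp
  then have "t * \<eta> \<le> t\<^sup>2 + \<eta>\<^sup>2" using sum_squares_bound[of t \<eta>] by linarith
  then show ?thesis using \<eta> by (simp add: pos_le_divide_eq add_divide_distrib[symmetric] power2_eq_square field_simps)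
qed

lemma card_far_partners_fraction_le:
  fixes \<eta> :: real
  assumes wf: "wf_instance n k I" and \<mu>: "stable n k I \<mu>" and n: "n > 0" and \<eta>: "\<eta> > 0" and j: "j \<le> k"
  shows "real (card {m\<in>{..<n}. take j (mprof I m) \<noteq> take j (wprof I (\<mu> m))}) / real n
    \<le> \<eta> + 2 ^ j * (same_prefix_pairs n j (mprof I) (mprof I) + same_prefix_pairs n j (wprof I) (wprof I)
                 - 2 * same_prefix_pairs n j (mprof I) (wprof I)) / (real n ^ 2 * \<eta>)"
    (is "?t \<le> \<eta> + 2 ^ j * ?Z / _")
proof -
  have sq: "?t\<^sup>2 \<le> 2 ^ j * ?Z / real n ^ 2"
    using card_far_partners_squared_le[OF wf \<mu> j] n by (simp add: power_divide divide_right_mono)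
  have "?t \<le> \<eta> + ?t\<^sup>2 / \<eta>" using \<eta> by (intro le_add_square_div) simp_all
  also have "?t\<^sup>2 / \<eta> \<le> 2 ^ j * ?Z / (real n ^ 2 * \<eta>)"
    using divide_right_mono[OF sq, of \<eta>] \<eta> by simp
  finally show ?thesis by simp
qed

lemma prob_match_dist_far_le_prefix_pairs:
  fixes \<delta> \<eta> :: real
  assumes wf: "wf_instance n k I" and n: "n \<ge> 2" and \<eta>: "\<eta> > 0" and j1: "j1 \<le> k" and j2: "j2 \<le> k"
    and h1: "real n powr (-1 - \<delta>) \<le> (1/2) ^ j1" and h2: "(1/2) ^ j2 \<le> real n powr (-1 + \<delta>)"
  shows "measure_pmf.prob (participant_pmf n) {x. \<bar>log 2 (match_dist n k I x) / log 2 (real n) + 1\<bar> > \<delta>}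
    \<le> same_prefix_pairs n j1 (mprof I) (wprof I) / real n + \<eta> +
       2 ^ j2 * (same_prefix_pairs n j2 (mprof I) (mprof I) + same_prefix_pairs n j2 (wprof I) (wprof I)
                 - 2 * same_prefix_pairs n j2 (mprof I) (wprof I)) / (real n ^ 2 * \<eta>)"
proof -
  let ?a = "mprof I" and ?b = "wprof I" and ?S = "Inl ` {..<n} \<union> Inr ` {..<n} :: (nat + nat) set"
  define far where "far x \<longleftrightarrow> \<bar>log 2 (match_dist n k I x) / log 2 (real n) + 1\<bar> > \<delta>" for x
  define \<mu> where "\<mu> = (SOME \<mu>. stable n k I \<mu>)"
  have \<mu>: "stable n k I \<mu>" unfolding \<mu>_def by (rule someI_ex[OF stable_exists[OF wf]])
  note M = matchingD[OF stableD(1)[OF \<mu>]] and len = wf_instance_lengths[OF wf]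
  define Close where "Close = {m\<in>{..<n}. take j1 (?a m) = take j1 (?b (\<mu> m))}"
  define Far where "Far = {m\<in>{..<n}. take j2 (?a m) \<noteq> take j2 (?b (\<mu> m))}"
  have n1: "real n > 1" using n by simp
  note prefix_cond = log_dw_far_imp_prefix_condition[OF n1 j1 j2 h1 h2]
  have "card {x \<in> ?S. far x} \<le> 2 * card {m\<in>{..<n}. m \<in> Close \<or> m \<in> Far}"
  proof (rule card_participants_le_matched_men[OF stableD(1)[OF \<mu>]])
    fix m assume "m < n" "far (Inl m)"
    then show "m \<in> Close \<or> m \<in> Far"
      using prefix_cond[OF len(1) len(2)[OF M(3)]] unfolding far_def Close_def Far_def
      by (simp add: match_dist_def \<mu>_def[symmetric])
  next
    fix w assume "w < n" "far (Inr w)"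
    then show "inv_into {..<n} \<mu> w \<in> Close \<or> inv_into {..<n} \<mu> w \<in> Far"
      using prefix_cond[OF len(1)[OF M(4)] len(2)] M(4,5) unfolding far_def Close_def Far_def
      by (simp add: match_dist_def \<mu>_def[symmetric])
  qed
  also have "card {m\<in>{..<n}. m \<in> Close \<or> m \<in> Far} \<le> card Close + card Far"
    by (rule order_trans[OF _ card_Un_le]) (auto intro: card_mono simp: Close_def Far_def)
  finally have bad: "real (card {x \<in> ?S. far x}) \<le> 2 * (real (card Close) + real (card Far))" by simp
  have "measure_pmf.prob (participant_pmf n) {x. far x} = real (card {x \<in> ?S. far x}) / real (2 * n)"
    unfolding participant_pmf_def using n
    by (subst measure_pmf_of_set) (auto simp: card_participants Int_def lessThan_empty_iff)
  also have "\<dots> \<le> real (card Close) / real n + real (card Far) / real n"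
    using bad n by (simp add: field_simps)
  also have "\<dots> \<le> same_prefix_pairs n j1 ?a ?b / real n + (\<eta> + 2 ^ j2 *
      (same_prefix_pairs n j2 ?a ?a + same_prefix_pairs n j2 ?b ?b - 2 * same_prefix_pairs n j2 ?a ?b) / (real n ^ 2 * \<eta>))"
    using card_close_partners_le[OF M(3), where j=j1 and a="mprof I" and b="wprof I"]
      card_far_partners_fraction_le[OF wf \<mu> _ \<eta> j2] n
    unfolding Close_def Far_def by (intro add_mono divide_right_mono) auto
  finally show ?thesis unfolding far_def by simp
qed

lemma expectation_prefix_pairs_combination:
  fixes c e :: real
  assumes j1: "j1 \<le> k" and j2: "j2 \<le> k"
  shows "measure_pmf.expectation (pair_pmf (profiles_pmf n k) (profiles_pmf n k))
      (\<lambda>x. same_prefix_pairs n j1 (fst x) (snd x) / real n + e +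
           c * (same_prefix_pairs n j2 (fst x) (fst x) + same_prefix_pairs n j2 (snd x) (snd x)
                - 2 * same_prefix_pairs n j2 (fst x) (snd x)))
    = real n * (1/2) ^ j1 + e + c * (2 * real n - 2 * real n * (1/2) ^ j2)"
proof -
  let ?P = "profiles_pmf n k"
  let ?Q = "pair_pmf ?P ?P"
  have indep: "measure_pmf.expectation ?Q (\<lambda>x. same_prefix_pairs n j (fst x) (snd x)) = real n * real n * (1/2) ^ j"
    if "j \<le> k" for j
    using expectation_same_prefix_pairs_indep[OF that] by (simp add: case_prod_unfold)
  have self: "measure_pmf.expectation ?Q (\<lambda>x. same_prefix_pairs n j2 (fst x) (fst x))
        = real n + real n * (real n - 1) * (1/2) ^ j2"
      "measure_pmf.expectation ?Q (\<lambda>x. same_prefix_pairs n j2 (snd x) (snd x))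
        = real n + real n * (real n - 1) * (1/2) ^ j2"
    using expectation_pair_pmf_fst[of ?P ?P "\<lambda>f. same_prefix_pairs n j2 f f"]
      expectation_pair_pmf_snd[of ?P ?P "\<lambda>f. same_prefix_pairs n j2 f f"]
      expectation_same_prefix_pairs_self[OF j2] by simp_all
  have "measure_pmf.expectation ?Q
      (\<lambda>x. same_prefix_pairs n j1 (fst x) (snd x) / real n + e +
           c * (same_prefix_pairs n j2 (fst x) (fst x) + same_prefix_pairs n j2 (snd x) (snd x)
                - 2 * same_prefix_pairs n j2 (fst x) (snd x)))
    = measure_pmf.expectation ?Q (\<lambda>x. same_prefix_pairs n j1 (fst x) (snd x)) / real n + e +
      c * (measure_pmf.expectation ?Q (\<lambda>x. same_prefix_pairs n j2 (fst x) (fst x))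
           + measure_pmf.expectation ?Q (\<lambda>x. same_prefix_pairs n j2 (snd x) (snd x))
           - 2 * measure_pmf.expectation ?Q (\<lambda>x. same_prefix_pairs n j2 (fst x) (snd x)))"
    by (simp add: integrable_measure_pmf_finite finite_profiles_pmf)
  also have "\<dots> = real n * (1/2) ^ j1 + e + c * (2 * real n - 2 * real n * (1/2) ^ j2)"
    unfolding indep[OF j1] indep[OF j2] self by (simp add: algebra_simps)
  finally show ?thesis .
qed

lemma prob_match_dist_far_le:
  fixes \<delta> \<eta> :: real
  assumes n: "n \<ge> 2" and \<eta>: "\<eta> > 0" and j1: "j1 \<le> k" and j2: "j2 \<le> k"
    and h1: "real n powr (-1 - \<delta>) \<le> (1/2) ^ j1" and h2: "(1/2) ^ j2 \<le> real n powr (-1 + \<delta>)"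
  shows "measure_pmf.prob (pair_pmf (rpmp_pmf n k) (participant_pmf n))
           {(I, x). \<bar>log 2 (match_dist n k I x) / log 2 (real n) + 1\<bar> > \<delta>}
         \<le> real n * (1/2) ^ j1 + \<eta> + 2 * 2 ^ j2 / (real n * \<eta>)"
proof -
  define c where "c = 2 ^ j2 / (real n ^ 2 * \<eta>)"
  define h where "h x = same_prefix_pairs n j1 (fst x) (snd x) / real n + \<eta> +
      c * (same_prefix_pairs n j2 (fst x) (fst x) + same_prefix_pairs n j2 (snd x) (snd x)
           - 2 * same_prefix_pairs n j2 (fst x) (snd x))" for x
  have "measure_pmf.prob (pair_pmf (rpmp_pmf n k) (participant_pmf n))
           {(I, x). \<bar>log 2 (match_dist n k I x) / log 2 (real n) + 1\<bar> > \<delta>}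
      = measure_pmf.expectation (rpmp_pmf n k) (\<lambda>I. measure_pmf.prob (participant_pmf n)
           {x. \<bar>log 2 (match_dist n k I x) / log 2 (real n) + 1\<bar> > \<delta>})"
    by (simp add: measure_pair_pmf_finite[OF finite_rpmp_pmf])
  also have "\<dots> \<le> measure_pmf.expectation (rpmp_pmf n k) (\<lambda>I. h (mprof I, wprof I))"
    using prob_match_dist_far_le_prefix_pairs[OF wf_instance_rpmp_pmf n \<eta> j1 j2 h1 h2]
    by (intro expectation_mono_finite[OF finite_rpmp_pmf]) (simp add: h_def c_def field_simps)
  also have "\<dots> = measure_pmf.expectation (pair_pmf (profiles_pmf n k) (profiles_pmf n k)) h"
    by (rule expectation_rpmp_pmf_profiles)
  also have "\<dots> = real n * (1/2) ^ j1 + \<eta> + c * (2 * real n - 2 * real n * (1/2) ^ j2)"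
    unfolding h_def by (rule expectation_prefix_pairs_combination[OF j1 j2])
  also have "\<dots> \<le> real n * (1/2) ^ j1 + \<eta> + c * (2 * real n)"
    using \<eta> by (intro add_left_mono mult_left_mono) (auto simp: c_def)
  also have "c * (2 * real n) = 2 * 2 ^ j2 / (real n * \<eta>)"
    unfolding c_def using n by (simp add: power2_eq_square)
  finally show ?thesis .
qed

section \<open>Asymptotics\<close>

lemma half_power_less_powr:
  assumes "x > 0" "real k > c * log 2 x"
  shows "(1/2::real) ^ k < x powr (-c)"
proof -
  have "x powr c = 2 powr (c * log 2 x)" using two_powr_mult_log assms(1) by simp
  also have "\<dots> < 2 ^ k" using assms(2) by (simp add: powr_realpow[symmetric])
  finally show ?thesis using assms(1) by (simp add: powr_minus_divide power_one_over divide_strict_left_mono)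
qed

lemma tendsto_real_powr_neg: "e > 0 \<Longrightarrow> (\<lambda>n. real n powr (-e)) \<longlonglongrightarrow> 0"
  by (rule tendsto_neg_powr) (auto simp: filterlim_real_sequentially)

lemma two_power_floor_bounds:
  assumes "t \<ge> 0"
  shows "(2::real) ^ nat \<lfloor>t\<rfloor> \<le> 2 powr t" "2 powr t \<le> 2 * 2 ^ nat \<lfloor>t\<rfloor>"
proof -
  have e: "(2::real) ^ nat \<lfloor>t\<rfloor> = 2 powr (of_int \<lfloor>t\<rfloor>)" using assms by (simp add: powr_realpow[symmetric])
  show "(2::real) ^ nat \<lfloor>t\<rfloor> \<le> 2 powr t" unfolding e by simp
  have "2 powr t \<le> 2 powr (of_int \<lfloor>t\<rfloor> + 1)" by simp
  then show "2 powr t \<le> 2 * 2 ^ nat \<lfloor>t\<rfloor>" unfolding e by (simp add: powr_add)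
qed

lemma two_power_ceiling_bounds:
  assumes "t \<ge> 0"
  shows "2 powr t \<le> (2::real) ^ nat \<lceil>t\<rceil>" "(2::real) ^ nat \<lceil>t\<rceil> \<le> 2 * 2 powr t"
proof -
  have e: "(2::real) ^ nat \<lceil>t\<rceil> = 2 powr (of_int \<lceil>t\<rceil>)" using assms by (simp add: powr_realpow[symmetric])
  show "2 powr t \<le> (2::real) ^ nat \<lceil>t\<rceil>" unfolding e by simp
  have "2 powr (of_int \<lceil>t\<rceil>) \<le> 2 powr (t + 1)" by simp
  then show "(2::real) ^ nat \<lceil>t\<rceil> \<le> 2 * 2 powr t" unfolding e by (simp add: powr_add)
qed

text \<open>Prefix lengths \<open>j\<^sub>1 \<approx> (1 + d) log n\<close> and \<open>j\<^sub>2 \<approx> (1 - d) log n\<close> detect matching distances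
  below \<open>n\<^sup>-\<^sup>1\<^sup>-\<^sup>d\<close> and above \<open>n\<^sup>-\<^sup>1\<^sup>+\<^sup>d\<close>.\<close>

lemma prefix_lengths_exist:
  fixes d \<epsilon> :: real
  assumes n: "n \<ge> 2" and d: "0 < d" "d \<le> \<epsilon>" "d \<le> 1" and k: "real k > (1 + \<epsilon>) * log 2 (real n)"
  obtains j1 j2 where "j1 \<le> k" "j2 \<le> k"
    "real n powr (-1 - d) \<le> (1/2) ^ j1" "real n * (1/2) ^ j1 \<le> 2 * real n powr (-d)"
    "(1/2) ^ j2 \<le> real n powr (-1 + d)" "2 ^ j2 \<le> 2 * real n powr (1 - d)"
proof
  let ?L = "log 2 (real n)"
  define t1 t2 where "t1 = (1 + d) * ?L" and "t2 = (1 - d) * ?L"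
  have L: "?L \<ge> 1" using n by simp
  have "(1 + d) * ?L \<le> (1 + \<epsilon>) * ?L" "(1 - d) * ?L \<le> (1 + \<epsilon>) * ?L"
    "0 \<le> (1 + d) * ?L" "0 \<le> (1 - d) * ?L"
    using L d by (intro mult_right_mono mult_nonneg_nonneg; simp)+
  then have t: "0 \<le> t1" "0 \<le> t2" "t1 < real k" "t2 < real k"
    using k unfolding t1_def t2_def by linarith+
  have np: "real n > 0" using n by simp
  have p1: "2 powr t1 = real n powr (1 + d)" and p2: "2 powr t2 = real n powr (1 - d)"
    unfolding t1_def t2_def using two_powr_mult_log[OF np] by auto
  show "nat \<lfloor>t1\<rfloor> \<le> k" "nat \<lceil>t2\<rceil> \<le> k" using t by linarith+
  note f = two_power_floor_bounds[OF t(1), unfolded p1] and c = two_power_ceiling_bounds[OF t(2), unfolded p2]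
  have "real n powr (-1 - d) = 1 / real n powr (1 + d)"
    using powr_minus_divide[of "real n" "1 + d"] by simp
  then show "real n powr (-1 - d) \<le> (1/2) ^ nat \<lfloor>t1\<rfloor>"
    using f(1) by (simp add: power_one_over frac_le)
  show "real n * (1/2) ^ nat \<lfloor>t1\<rfloor> \<le> 2 * real n powr (-d)"
  proof -
    have "real n * (1/2) ^ nat \<lfloor>t1\<rfloor> \<le> real n * (2 / real n powr (1 + d))"
      using f(2) np by (intro mult_left_mono) (simp_all add: power_one_over field_simps)
    also have "\<dots> = 2 * real n powr (-d)"
      using np by (simp add: powr_add powr_minus_divide field_simps)
    finally show ?thesis .
  qed
  have "real n powr (-1 + d) = 1 / real n powr (1 - d)"
    using powr_minus_divide[of "real n" "1 - d"] by simp
  moreover have "0 < real n powr (1 - d)" using np by simp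
  ultimately show "(1/2) ^ nat \<lceil>t2\<rceil> \<le> real n powr (-1 + d)"
    using c(1) by (simp add: power_one_over frac_le)
  show "2 ^ nat \<lceil>t2\<rceil> \<le> 2 * real n powr (1 - d)" by (rule c(2))
qed

lemma prob_match_dist_far_le_powr:
  fixes d \<delta> \<epsilon> :: real
  assumes n: "n \<ge> 2" and d: "0 < d" "d \<le> \<delta>" "d \<le> \<epsilon>" "d \<le> 1"
    and k: "real k > (1 + \<epsilon>) * log 2 (real n)"
  shows "measure_pmf.prob (pair_pmf (rpmp_pmf n k) (participant_pmf n))
           {(I, x). \<bar>log 2 (match_dist n k I x) / log 2 (real n) + 1\<bar> > \<delta>}
         \<le> 2 * real n powr (-d) + 5 * real n powr (-d/2)"
proof -
  obtain j1 j2 where j: "j1 \<le> k" "j2 \<le> k"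
    and h1: "real n powr (-1 - d) \<le> (1/2) ^ j1" and j1: "real n * (1/2) ^ j1 \<le> 2 * real n powr (-d)"
    and h2: "(1/2) ^ j2 \<le> real n powr (-1 + d)" and j2: "2 ^ j2 \<le> 2 * real n powr (1 - d)"
    using prefix_lengths_exist[OF n d(1,3,4) k] by blast
  have np: "real n \<ge> 1" using n by simp
  have "real n powr (-1 - \<delta>) \<le> real n powr (-1 - d)" "real n powr (-1 + d) \<le> real n powr (-1 + \<delta>)"
    using d np by (intro powr_mono; simp)+
  then have h1': "real n powr (-1 - \<delta>) \<le> (1/2) ^ j1" and h2': "(1/2) ^ j2 \<le> real n powr (-1 + \<delta>)"
    using h1 h2 by linarith+
  let ?\<eta> = "real n powr (-d/2)"
  have "measure_pmf.prob (pair_pmf (rpmp_pmf n k) (participant_pmf n))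
           {(I, x). \<bar>log 2 (match_dist n k I x) / log 2 (real n) + 1\<bar> > \<delta>}
      \<le> real n * (1/2) ^ j1 + ?\<eta> + 2 * 2 ^ j2 / (real n * ?\<eta>)"
    using np by (intro prob_match_dist_far_le[OF n _ j h1' h2']) simp
  also have "2 * 2 ^ j2 / (real n * ?\<eta>) \<le> 2 * (2 * real n powr (1 - d)) / real n powr (1 - d/2)"
    using j2 np by (simp add: powr_mult_base divide_right_mono)
  also have "\<dots> = 4 * real n powr ((1 - d) - (1 - d/2))"
    by (simp only: powr_diff)
  also have "(1 - d) - (1 - d/2) = -d/2" by simp
  finally show ?thesis using j1 by simp
qed

lemma tendsto_prob_frac_multi_gt:
  fixes \<epsilon> \<delta> :: real
  assumes \<epsilon>: "\<epsilon> > 0" and \<delta>: "\<delta> > 0"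
    and k: "\<forall>\<^sub>F n in sequentially. real (k n) > (1 + \<epsilon>) * log 2 (real n)"
  shows "(\<lambda>n. measure_pmf.prob (rpmp_pmf n (k n)) {I. frac_multi n (k n) I > \<delta>}) \<longlonglongrightarrow> 0"
proof (rule tendsto_sandwich[of "\<lambda>_. 0" _ _ "\<lambda>n. real n powr (-\<epsilon>) / \<delta>"])
  show "\<forall>\<^sub>F n in sequentially. measure_pmf.prob (rpmp_pmf n (k n)) {I. frac_multi n (k n) I > \<delta>}
      \<le> real n powr (-\<epsilon>) / \<delta>"
    using k eventually_gt_at_top[of 0]
  proof eventually_elim
    case (elim n)
    then have np: "real n > 0" by simp
    have "measure_pmf.prob (rpmp_pmf n (k n)) {I. frac_multi n (k n) I > \<delta>} \<le> real n * (1/2) ^ k n / \<delta>"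
      using elim \<delta> by (intro prob_frac_multi_gt_le) auto
    also have "\<dots> \<le> real n * real n powr (-(1 + \<epsilon>)) / \<delta>"
      using half_power_less_powr[OF np elim(1)] np \<delta> by (intro divide_right_mono mult_left_mono) auto
    also have "\<dots> = real n powr (-\<epsilon>) / \<delta>" by (simp add: powr_mult_base)
    finally show ?case .
  qed
  show "(\<lambda>n. real n powr (-\<epsilon>) / \<delta>) \<longlonglongrightarrow> 0"
    using tendsto_divide_zero[OF tendsto_real_powr_neg[OF \<epsilon>]] by simp
qed auto

lemma tendsto_prob_match_dist_far:
  fixes \<epsilon> \<delta> :: real
  assumes \<epsilon>: "\<epsilon> > 0" and \<delta>: "\<delta> > 0"
    and k: "\<forall>\<^sub>F n in sequentially. real (k n) > (1 + \<epsilon>) * log 2 (real n)"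
  shows "(\<lambda>n. measure_pmf.prob (pair_pmf (rpmp_pmf n (k n)) (participant_pmf n))
           {(I, x). \<bar>log 2 (match_dist n (k n) I x) / log 2 (real n) + 1\<bar> > \<delta>}) \<longlonglongrightarrow> 0"
proof -
  define d where "d = min \<delta> (min \<epsilon> 1)"
  have d: "0 < d" "d \<le> \<delta>" "d \<le> \<epsilon>" "d \<le> 1" using \<epsilon> \<delta> by (auto simp: d_def)
  show ?thesis
  proof (rule tendsto_sandwich[of "\<lambda>_. 0" _ _ "\<lambda>n. 2 * real n powr (-d) + 5 * real n powr (-d/2)"])
    show "\<forall>\<^sub>F n in sequentially. measure_pmf.prob (pair_pmf (rpmp_pmf n (k n)) (participant_pmf n))
           {(I, x). \<bar>log 2 (match_dist n (k n) I x) / log 2 (real n) + 1\<bar> > \<delta>}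
        \<le> 2 * real n powr (-d) + 5 * real n powr (-d/2)"
      using k eventually_ge_at_top[of 2] by eventually_elim (rule prob_match_dist_far_le_powr[OF _ d])
    have "(\<lambda>n. 2 * real n powr (-d) + 5 * real n powr (-(d/2))) \<longlonglongrightarrow> 2 * 0 + 5 * 0"
      using d by (intro tendsto_intros tendsto_real_powr_neg) auto
    then show "(\<lambda>n. 2 * real n powr (-d) + 5 * real n powr (-d/2)) \<longlonglongrightarrow> 0" by simp
  qed auto
qed

lemma tendsto_prob_unique_without_ties:
  fixes \<epsilon> :: real
  assumes \<epsilon>: "\<epsilon> > 0" and k: "\<forall>\<^sub>F n in sequentially. real (k n) > (2 + \<epsilon>) * log 2 (real n)"
  shows "(\<lambda>n. measure_pmf.prob (rpmp_pmf n (k n)) {I. unique_without_ties n (k n) I}) \<longlonglongrightarrow> 1"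
proof (rule tendsto_sandwich[of "\<lambda>n. 1 - 2 * real n powr (-\<epsilon>)" _ _ "\<lambda>_. 1"])
  show "\<forall>\<^sub>F n in sequentially. 1 - 2 * real n powr (-\<epsilon>)
      \<le> measure_pmf.prob (rpmp_pmf n (k n)) {I. unique_without_ties n (k n) I}"
    using k eventually_gt_at_top[of 0]
  proof eventually_elim
    case (elim n)
    then have np: "real n > 0" by simp
    have "2 * real n * real n * (1/2) ^ k n \<le> 2 * real n * real n * real n powr (-(2 + \<epsilon>))"
      using half_power_less_powr[OF np elim(1)] np by (intro mult_left_mono) auto
    also have "\<dots> = 2 * real n powr (-\<epsilon>)" by (simp add: powr_mult_base)
    finally show ?case using prob_unique_without_ties_ge[of n "k n"] by linarith
  qed
  have "(\<lambda>n. 1 - 2 * real n powr (-\<epsilon>)) \<longlonglongrightarrow> 1 - 2 * 0"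
    by (intro tendsto_intros tendsto_real_powr_neg \<epsilon>)
  then show "(\<lambda>n. 1 - 2 * real n powr (-\<epsilon>)) \<longlonglongrightarrow> 1" by simp
qed auto

theorem theorem3p4:
  fixes \<epsilon> :: real and k :: "nat \<Rightarrow> nat"
  assumes "\<epsilon> > 0"
  shows "((\<forall>\<^sub>F n in sequentially. real (k n) > (1 + \<epsilon>) * log 2 (real n)) \<longrightarrow>
           (\<forall>\<delta>>0. (\<lambda>n. measure_pmf.prob (rpmp_pmf n (k n))
                        {I. frac_multi n (k n) I > \<delta>}) \<longlonglongrightarrow> 0) \<and>
           (\<forall>\<delta>>0. (\<lambda>n. measure_pmf.prob (pair_pmf (rpmp_pmf n (k n)) (participant_pmf n))
                        {(I, x). \<bar>log 2 (match_dist n (k n) I x) / log 2 (real n) + 1\<bar> > \<delta>})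
                     \<longlonglongrightarrow> 0)) \<and>
         ((\<forall>\<^sub>F n in sequentially. real (k n) > (2 + \<epsilon>) * log 2 (real n)) \<longrightarrow>
           (\<lambda>n. measure_pmf.prob (rpmp_pmf n (k n)) {I. unique_without_ties n (k n) I})
             \<longlonglongrightarrow> 1)"
  using tendsto_prob_frac_multi_gt[OF assms] tendsto_prob_match_dist_far[OF assms]
    tendsto_prob_unique_without_ties[OF assms] by blast

end
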